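(* Let $f \in C^1(\mathcal{T})$ and $g \in C^1([0,1])$, where $\mathcal{T}=\{(x,y)\in\mathbb{R}^2: 0\le y\le x\le 1\}$, and set $M_f=\sup_{(x,y)\in\mathcal{T}}|f(x,y)|$. Let $k\in C^1(\mathcal{T})$ be the solution of the Goursat problem $$k_y(x,y)+k_x(x,y)=f(x,y)-\int_y^x f(x,\eta)k(\eta,y)\,d\eta \ \ \forall (x,y)\in\mathcal{T},\qquad k(1,y)=0\ \ \forall y\in[0,1],$$ and define the observer gain $p_1(x)=g(x)-k(x,0)$. Consider the plant $$u_t(x,t)=u_x(x,t)+g(x)u(0,t)+\int_0^x f(x,y)u(y,t)\,dy,\qquad u(1,t)=U(t),\qquad Y(t)=u(0,t),$$ with initial condition $u(\cdot,0)=u_0$, and the observer $$\hat u_t(x,t)=\hat u_x(x,t)+g(x)\hat u(0,t)+\int_0^x f(x,y)\hat u(y,t)\,dy+p_1(x)\,[u(0,t)-\hat u(0,t)],\qquad \hat u(1,t)=U(t),$$ with initial condition $\hat u(\cdot,0)=\hat u_0$. Let $U\in C^1(\mathbb{R}^+)$ and $u_0,\hat u_0\in C^1([0,1])$ satisfy the compatibility conditions $$u_0(1)=U(0),\qquad \dot U(0)=u_0'(1)+g(1)u_0(0)+\int_0^1 f(1,y)u_0(y)\,dy,$$ $$\hat u_0(1)=U(0),\qquad \dot U(0)=\hat u_0'(1)+g(1)\hat u_0(0)+\int_0^1 f(1,y)\hat u_0(y)\,dy+p_1(1)\,[u_0(0)-\hat u_0(0)].$$ Then for all $t\ge 0$ and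 all $c>0$, the (classical) solutions satisfy $$\|u[t]-\hat u[t]\|\le M e^{-ct}\|u_0-\hat u_0\|,\qquad M=e^{c}\Big(1+\big(M_f e^{M_f}\big)e^{M_f e^{M_f}}\Big)\big(1+M_f e^{M_f}\big).$$ Moreover, $\hat u(x,t)=u(x,t)$ for all $x\in[0,1]$ and all $t\ge 1$, i.e., the observer error is zero for $t\ge 1$ and remains zero thereafter.
   Context: $\mathbb{R}^+=[0,\infty)$. For a function $u:[0,1]\times\mathbb{R}^+\to\mathbb{R}$, $u[t]$ denotes the profile $x\mapsto u(x,t)$, and $\|\cdot\|$ is the norm of $L^2(0,1)$. The Goursat problem for $k$ has a unique $C^1(\mathcal{T})$ solution under the stated regularity of $f$, $g$. Under the stated compatibility conditions the plant and observer systems have unique classical solutions defined for all $t\ge 0$. *)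

theory Defs
  imports "HOL-Analysis.Analysis"
begin

definition Tri :: "(real \<times> real) set" where
  "Tri = {(x, y). 0 \<le> y \<and> y \<le> x \<and> x \<le> 1}"

definition Dom :: "(real \<times> real) set" where
  "Dom = {0..1} \<times> {0..}"

definition C1_with :: "(real \<times> real \<Rightarrow> real) \<Rightarrow> (real \<times> real \<Rightarrow> real \<times> real \<Rightarrow> real)
    \<Rightarrow> (real \<times> real) set \<Rightarrow> bool" where
  "C1_with h h' S \<longleftrightarrow>
     (\<forall>p\<in>S. (h has_derivative h' p) (at p within S)) \<and> (\<forall>v. continuous_on S (\<lambda>p. h' p v))"

definition C1_on2 :: "(real \<times> real \<Rightarrow> real) \<Rightarrow> (real \<times> real) set \<Rightarrow> bool" where
  "C1_on2 h S \<longleftrightarrow> (\<exists>h'. C1_with h h' S)"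

definition C1_with1 :: "(real \<Rightarrow> real) \<Rightarrow> (real \<Rightarrow> real) \<Rightarrow> real set \<Rightarrow> bool" where
  "C1_with1 h h' S \<longleftrightarrow>
     (\<forall>x\<in>S. (h has_real_derivative h' x) (at x within S)) \<and> continuous_on S h'"

definition C1_on1 :: "(real \<Rightarrow> real) \<Rightarrow> real set \<Rightarrow> bool" where
  "C1_on1 h S \<longleftrightarrow> (\<exists>h'. C1_with1 h h' S)"

definition L2norm :: "(real \<Rightarrow> real) \<Rightarrow> real" where
  "L2norm h = sqrt (integral {0..1} (\<lambda>x. (h x)\<^sup>2))"

end

theory Submission
  imports Defs
begin

(* The error e = u - hu solves e_t = e_x + k(x,0) e(0,t) + int_0^x f(x,y) e(y,t) dy, e(1,t) = 0.
   The Volterra transformation e = w - int_0^x k(x,y) w(y,t) dy, inverted by the resolvent kernel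
   of k, maps it to the transport equation w_t = w_x, w(1,t) = 0: since k solves the Goursat
   problem, w_t - w_x solves a homogeneous Volterra equation and therefore vanishes. For w every
   energy int_0^1 psi(x+t) w(x,t)^2 dx with psi >= 0 is nonincreasing; psi = 1 gives
   ||w(t)|| <= ||w(0)||, and psi(s) = max(0, s-1)^2 gives w(t) = 0 for t >= 1.
   Integrating k along the characteristics and iterating gives |k| <= e^Mf - 1 <= Mf e^Mf =: L,
   so the resolvent is bounded by L e^L and the two transformations have L^2 operator norms at
   most 1 + L and 1 + L e^L; the factor e^c absorbs e^(-ct) for t < 1. *)

section \<open>Integrals over intervals and triangles\<close>

lemma mem_Tri [simp]: "(x, y) \<in> Tri \<longleftrightarrow> 0 \<le> y \<and> y \<le> x \<and> x \<le> 1"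
  by (simp add: Tri_def)

lemma mem_Dom [simp]: "(x, t) \<in> Dom \<longleftrightarrow> x \<in> {0..1} \<and> 0 \<le> t"
  by (auto simp: Dom_def)

lemma abs_integral_le_integral:
  fixes f g :: "real \<Rightarrow> real"
  assumes "f integrable_on {a..b}" "g integrable_on {a..b}" "\<And>x. x \<in> {a..b} \<Longrightarrow> \<bar>f x\<bar> \<le> g x"
  shows "\<bar>integral {a..b} f\<bar> \<le> integral {a..b} g"
  using integral_norm_bound_integral[OF assms(1,2)] assms(3) by simp

lemma integral_shifted_power:
  fixes y x :: real
  assumes "y \<le> x"
  shows "integral {y..x} (\<lambda>s. (s - y) ^ n) = (x - y) ^ Suc n / real (Suc n)"
proof -
  have "((\<lambda>s. (s - y) ^ n) has_integral ((x - y) ^ Suc n / Suc n - (y - y) ^ Suc n / Suc n)) {y..x}"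
  proof (rule fundamental_theorem_of_calculus[OF assms])
    fix s assume "s \<in> {y..x}"
    have "((\<lambda>s. (s - y) ^ Suc n / Suc n) has_real_derivative (Suc n * (s - y) ^ n / Suc n))
          (at s within {y..x})"
      by (intro derivative_eq_intros) auto
    then show "((\<lambda>s. (s - y) ^ Suc n / Suc n) has_vector_derivative (s - y) ^ n) (at s within {y..x})"
      by (simp add: has_real_derivative_iff_has_vector_derivative del: of_nat_Suc)
  qed
  then show ?thesis by (simp add: integral_unique)
qed

lemma integral_clamp:
  fixes G :: "real \<Rightarrow> real"
  assumes "a \<le> lo" "lo \<le> hi" "hi \<le> b" "continuous_on {lo..hi} G"
  shows "integral {a..b} (\<lambda>s. G (max lo (min s hi))) =
         (lo - a) * G lo + integral {lo..hi} G + (b - hi) * G hi"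
proof -
  let ?H = "\<lambda>s. G (max lo (min s hi))"
  have "continuous_on {a..b} ?H"
    by (rule continuous_on_compose2[OF assms(4)]) (use assms(2) in \<open>auto intro!: continuous_intros\<close>)
  then have iH: "?H integrable_on {a..b}" by (rule integrable_continuous_real)
  then have i1: "?H integrable_on {a..hi}" using integrable_subinterval_real assms by fastforce
  have "integral {a..b} ?H = integral {a..hi} ?H + integral {hi..b} ?H"
    using Henstock_Kurzweil_Integration.integral_combine[OF _ _ iH, of hi] assms by simp
  also have "integral {a..hi} ?H = integral {a..lo} ?H + integral {lo..hi} ?H"
    using Henstock_Kurzweil_Integration.integral_combine[OF _ _ i1, of lo] assms by simp
  also have "integral {a..lo} ?H = integral {a..lo} (\<lambda>s. G lo)"
    by (rule integral_cong) (use assms in auto)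
  also have "integral {lo..hi} ?H = integral {lo..hi} G"
    by (rule integral_cong) (use assms in auto)
  also have "integral {hi..b} ?H = integral {hi..b} (\<lambda>s. G hi)"
    by (rule integral_cong) (use assms in auto)
  finally show ?thesis using assms by simp
qed

(* Clamping the integration variable to [lo p, hi p] turns the variable bounds into a fixed box,
   where integral_continuous_on_param applies. *)
lemma continuous_on_integral_bounds_param:
  fixes G :: "'a::metric_space \<Rightarrow> real \<Rightarrow> real"
  assumes clo: "continuous_on U lo" and chi: "continuous_on U hi"
    and rng: "\<And>p. p \<in> U \<Longrightarrow> a \<le> lo p \<and> lo p \<le> hi p \<and> hi p \<le> b"
    and cG: "continuous_on {(p, s). p \<in> U \<and> lo p \<le> s \<and> s \<le> hi p} (\<lambda>(p, s). G p s)"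
  shows "continuous_on U (\<lambda>p. integral {lo p..hi p} (G p))"
proof -
  let ?c = "\<lambda>p s. max (lo p) (min s (hi p))"
  have "continuous_on (U \<times> {a..b}) ((\<lambda>(p, s). G p s) \<circ> (\<lambda>(p, s). (p, ?c p s)))"
  proof (rule continuous_on_compose)
    show "continuous_on (U \<times> {a..b}) (\<lambda>(p, s). (p, ?c p s))"
      unfolding case_prod_beta
      by (intro continuous_intros continuous_on_compose2[OF clo] continuous_on_compose2[OF chi]) auto
    show "continuous_on ((\<lambda>(p, s). (p, ?c p s)) ` (U \<times> {a..b})) (\<lambda>(p, s). G p s)"
      by (rule continuous_on_subset[OF cG]) (auto dest: rng)
  qed
  then have "continuous_on U (\<lambda>p. integral (cbox a b) (\<lambda>s. G p (?c p s)))"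
    by (intro integral_continuous_on_param) (simp add: o_def case_prod_beta cbox_interval)
  moreover have "continuous_on U (\<lambda>p. G p (lo p))" "continuous_on U (\<lambda>p. G p (hi p))"
    by (rule continuous_on_compose2[OF cG, where f="\<lambda>p. (p, lo p)", simplified],
        use rng in \<open>auto intro!: continuous_intros clo\<close>)
       (rule continuous_on_compose2[OF cG, where f="\<lambda>p. (p, hi p)", simplified],
        use rng in \<open>auto intro!: continuous_intros chi\<close>)
  ultimately have cont: "continuous_on U (\<lambda>p. integral (cbox a b) (\<lambda>s. G p (?c p s))
            - (lo p - a) * G p (lo p) - (b - hi p) * G p (hi p))"
    by (intro continuous_intros clo chi)
  have eq: "integral {lo p..hi p} (G p) = integral (cbox a b) (\<lambda>s. G p (?c p s))
            - (lo p - a) * G p (lo p) - (b - hi p) * G p (hi p)" if "p \<in> U" for p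
  proof -
    have "continuous_on {lo p..hi p} (G p)"
      by (rule continuous_on_compose2[OF cG, where f="\<lambda>s. (p, s)", simplified])
         (use that in \<open>auto intro!: continuous_intros\<close>)
    then show ?thesis
      using integral_clamp[of a "lo p" "hi p" b "G p"] rng[OF that] by (simp add: cbox_interval)
  qed
  show ?thesis by (rule continuous_on_eq[OF cont]) (simp add: eq)
qed

lemma continuous_on_triangle_integral_upto:
  fixes H :: "real \<Rightarrow> real \<Rightarrow> real"
  assumes "continuous_on {(y, s). a \<le> s \<and> s \<le> y \<and> y \<le> b} (\<lambda>(y, s). H y s)"
  shows "continuous_on {a..b} (\<lambda>y. integral {a..y} (H y))"
  by (rule continuous_on_integral_bounds_param[where a=a and b=b])
     (auto intro!: continuous_intros continuous_on_subset[OF assms])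

lemma continuous_on_triangle_integral_from:
  fixes H :: "real \<Rightarrow> real \<Rightarrow> real"
  assumes cH: "continuous_on {(y, s). a \<le> s \<and> s \<le> y \<and> y \<le> b} (\<lambda>(y, s). H y s)"
  shows "continuous_on {a..b} (\<lambda>s. integral {s..b} (\<lambda>y. H y s))"
proof (rule continuous_on_integral_bounds_param[where a=a and b=b])
  have "continuous_on {(s, y). s \<in> {a..b} \<and> s \<le> y \<and> y \<le> b} ((\<lambda>(y, s). H y s) \<circ> prod.swap)"
    by (rule continuous_on_compose) (auto intro!: continuous_intros continuous_on_subset[OF cH])
  then show "continuous_on {(s, y). s \<in> {a..b} \<and> s \<le> y \<and> y \<le> b} (\<lambda>(s, y). H y s)"
    by (simp add: o_def case_prod_beta)
qed (auto intro!: continuous_intros)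

lemma integral_of_tail_integrals:
  fixes h :: "real \<Rightarrow> real"
  assumes x: "0 \<le> x" and ch: "continuous_on {0..x} h"
  shows "integral {0..x} (\<lambda>y. integral {y..x} h) = integral {0..x} (\<lambda>s. s * h s)"
proof -
  let ?G = "\<lambda>y. integral {0..y} h"
  have ih: "h integrable_on {0..x}" by (rule integrable_continuous_real[OF ch])
  have iG: "?G integrable_on {0..x}"
    by (rule integrable_continuous_real[OF indefinite_integral_continuous_1[OF ih]])
  have d: "((\<lambda>s. s * ?G s) has_vector_derivative (?G s + s * h s)) (at s within {0..x})"
    if "s \<in> {0..x}" for s
    using DERIV_mult[OF DERIV_ident integral_has_real_derivative[OF ch that]]
    by (simp add: has_real_derivative_iff_has_vector_derivative mult.commute)
  have "((\<lambda>s. ?G s + s * h s) has_integral (x * ?G x)) {0..x}"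
    using fundamental_theorem_of_calculus[OF x d] by simp
  then have "((\<lambda>s. s * h s) has_integral (x * ?G x - integral {0..x} ?G)) {0..x}"
    using has_integral_diff[OF _ integrable_integral[OF iG]] by fastforce
  moreover have "((\<lambda>y. ?G x - ?G y) has_integral (x * ?G x - integral {0..x} ?G)) {0..x}"
    using has_integral_diff[OF has_integral_const_real[of "?G x" 0 x] integrable_integral[OF iG]] x
    by (simp add: mult.commute)
  moreover have "integral {y..x} h = ?G x - ?G y" if "y \<in> {0..x}" for y
    using Henstock_Kurzweil_Integration.integral_combine[OF _ _ ih, of y] that by auto
  ultimately show ?thesis
    by (metis (no_types, lifting) integral_cong integral_unique)
qed

lemma continuous_on_triangle_extension:
  fixes H :: "real \<Rightarrow> real \<Rightarrow> real"
  assumes "continuous_on {(y, s). 0 \<le> s \<and> s \<le> y \<and> y \<le> x} (\<lambda>(y, s). H y s)"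
  shows "continuous_on ({0..x} \<times> {0..x}) (\<lambda>(y, s). H (max y s) s)"
proof -
  have "continuous_on ({0..x} \<times> {0..x}) ((\<lambda>(y, s). H y s) \<circ> (\<lambda>(y, s). (max y s, s)))"
  proof (rule continuous_on_compose)
    show "continuous_on ({0..x} \<times> {0..x}) (\<lambda>(y, s). (max y s, s))"
      unfolding case_prod_beta by (intro continuous_intros)
    show "continuous_on ((\<lambda>(y, s). (max y s, s)) ` ({0..x} \<times> {0..x})) (\<lambda>(y, s). H y s)"
      by (rule continuous_on_subset[OF assms]) auto
  qed
  then show ?thesis by (simp add: o_def case_prod_beta)
qed

(* Extending H from the triangle s <= y to the square by H (max y s) s keeps it continuous,
   so Fubini on the square applies; both extra pieces integrate to int_0^x s * H s s ds. *)
lemma integral_swap_triangle: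
  fixes H :: "real \<Rightarrow> real \<Rightarrow> real"
  assumes x: "0 \<le> x" and cH: "continuous_on {(y, s). 0 \<le> s \<and> s \<le> y \<and> y \<le> x} (\<lambda>(y, s). H y s)"
  shows "integral {0..x} (\<lambda>y. integral {0..y} (H y)) = integral {0..x} (\<lambda>s. integral {s..x} (\<lambda>y. H y s))"
proof -
  let ?Ht = "\<lambda>y s. H (max y s) s"
  let ?h = "\<lambda>s. H s s"
  let ?P = "\<lambda>y. integral {0..y} (H y)"
  let ?Q = "\<lambda>s. integral {s..x} (\<lambda>y. H y s)"
  have cHt: "continuous_on ({0..x} \<times> {0..x}) (\<lambda>(y, s). ?Ht y s)"
    by (rule continuous_on_triangle_extension[OF cH])
  have ch: "continuous_on {0..x} ?h"
    by (rule continuous_on_compose2[OF cH, where f="\<lambda>s. (s, s)", simplified]) (auto intro!: continuous_intros)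
  have cP: "continuous_on {0..x} ?P" and cQ: "continuous_on {0..x} ?Q"
    using continuous_on_triangle_integral_upto[OF cH] continuous_on_triangle_integral_from[OF cH] by auto
  have row: "integral {0..x} (?Ht y) = ?P y + integral {y..x} ?h" if y: "y \<in> {0..x}" for y
  proof -
    have i: "?Ht y integrable_on {0..x}"
      by (rule integrable_continuous_real,
          rule continuous_on_compose2[OF cHt, where f="\<lambda>s. (y, s)", simplified])
         (use y in \<open>auto intro!: continuous_intros\<close>)
    then have "integral {0..x} (?Ht y) = integral {0..y} (?Ht y) + integral {y..x} (?Ht y)"
      using Henstock_Kurzweil_Integration.integral_combine[OF _ _ i, of y] y by auto
    also have "integral {0..y} (?Ht y) = ?P y" by (rule integral_cong) auto
    also have "integral {y..x} (?Ht y) = integral {y..x} ?h" by (rule integral_cong) auto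
    finally show ?thesis .
  qed
  have column: "integral {0..x} (\<lambda>y. ?Ht y s) = s * ?h s + ?Q s" if s: "s \<in> {0..x}" for s
  proof -
    have i: "(\<lambda>y. ?Ht y s) integrable_on {0..x}"
      by (rule integrable_continuous_real,
          rule continuous_on_compose2[OF cHt, where f="\<lambda>y. (y, s)", simplified])
         (use s in \<open>auto intro!: continuous_intros\<close>)
    then have "integral {0..x} (\<lambda>y. ?Ht y s) = integral {0..s} (\<lambda>y. ?Ht y s) + integral {s..x} (\<lambda>y. ?Ht y s)"
      using Henstock_Kurzweil_Integration.integral_combine[OF _ _ i, of s] s by auto
    also have "integral {0..s} (\<lambda>y. ?Ht y s) = integral {0..s} (\<lambda>y. ?h s)" by (rule integral_cong) auto
    also have "integral {s..x} (\<lambda>y. ?Ht y s) = ?Q s" by (rule integral_cong) auto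
    finally show ?thesis using s by simp
  qed
  have "integral {0..x} (\<lambda>y. integral {0..x} (?Ht y)) = integral {0..x} ?P + integral {0..x} (\<lambda>s. s * ?h s)"
    using integral_cong[of "{0..x}", OF row] integral_of_tail_integrals[OF x ch]
      integral_add[OF integrable_continuous_real[OF cP] integrable_continuous_real[OF indefinite_integral_continuous_1'[OF integrable_continuous_real[OF ch]]]]
    by simp
  moreover have "integral {0..x} (\<lambda>s. integral {0..x} (\<lambda>y. ?Ht y s)) = integral {0..x} (\<lambda>s. s * ?h s) + integral {0..x} ?Q"
    using integral_cong[of "{0..x}", OF column]
      integral_add[OF integrable_continuous_real integrable_continuous_real[OF cQ], of "\<lambda>s. s * ?h s"]
    by (simp add: continuous_intros ch)
  moreover have "integral (cbox 0 x) (\<lambda>y. integral (cbox 0 x) (?Ht y)) =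
      integral (cbox 0 x) (\<lambda>s. integral (cbox 0 x) (\<lambda>y. ?Ht y s))"
    by (rule integral_swap_continuous) (use cHt in \<open>simp only: cbox_Pair_eq, simp add: cbox_interval\<close>)
  ultimately show ?thesis by (simp add: cbox_interval)
qed

lemma integral_upto_eq_diagonal:
  fixes F Fx :: "real \<Rightarrow> real \<Rightarrow> real"
  assumes cF: "continuous_on Tri (\<lambda>(x, y). F x y)" and cFx: "continuous_on Tri (\<lambda>(x, y). Fx x y)"
    and dF: "\<And>\<xi> y. (\<xi>, y) \<in> Tri \<Longrightarrow> ((\<lambda>\<xi>. F \<xi> y) has_real_derivative Fx \<xi> y) (at \<xi> within {y..1})"
    and z: "z \<in> {0..1}"
  shows "integral {0..z} (F z) = integral {0..z} (\<lambda>\<xi>. F \<xi> \<xi> + integral {0..\<xi>} (Fx \<xi>))"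
proof -
  have cFxz: "continuous_on {(\<xi>, y). 0 \<le> y \<and> y \<le> \<xi> \<and> \<xi> \<le> z} (\<lambda>(\<xi>, y). Fx \<xi> y)"
    by (rule continuous_on_subset[OF cFx]) (use z in auto)
  have cdiag: "continuous_on {0..z} (\<lambda>y. F y y)"
    by (rule continuous_on_compose2[OF cF, where f="\<lambda>s. (s, s)", simplified])
       (use z in \<open>auto intro!: continuous_intros\<close>)
  have ftc: "F z y = F y y + integral {y..z} (\<lambda>\<xi>. Fx \<xi> y)" if y: "y \<in> {0..z}" for y
  proof -
    have "((\<lambda>\<xi>. Fx \<xi> y) has_integral (F z y - F y y)) {y..z}"
    proof (rule fundamental_theorem_of_calculus)
      show "y \<le> z" using y by simp
      fix \<xi> assume "\<xi> \<in> {y..z}"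
      then have "((\<lambda>\<xi>. F \<xi> y) has_real_derivative Fx \<xi> y) (at \<xi> within {y..z})"
        using dF[of \<xi> y] y z by (auto intro: DERIV_subset)
      then show "((\<lambda>\<xi>. F \<xi> y) has_vector_derivative Fx \<xi> y) (at \<xi> within {y..z})"
        by (simp add: has_real_derivative_iff_has_vector_derivative)
    qed
    then show ?thesis by (simp add: integral_unique)
  qed
  have "integral {0..z} (F z) =
      integral {0..z} (\<lambda>y. F y y) + integral {0..z} (\<lambda>y. integral {y..z} (\<lambda>\<xi>. Fx \<xi> y))"
    using integral_cong[of "{0..z}", OF ftc]
      integral_add[OF integrable_continuous_real[OF cdiag]
        integrable_continuous_real[OF continuous_on_triangle_integral_from[OF cFxz]]]
    by simp
  also have "integral {0..z} (\<lambda>y. integral {y..z} (\<lambda>\<xi>. Fx \<xi> y)) = integral {0..z} (\<lambda>\<xi>. integral {0..\<xi>} (Fx \<xi>))"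
    by (rule integral_swap_triangle[symmetric]) (use z cFxz in auto)
  also have "integral {0..z} (\<lambda>y. F y y) + \<dots> = integral {0..z} (\<lambda>\<xi>. F \<xi> \<xi> + integral {0..\<xi>} (Fx \<xi>))"
    by (intro integral_add[symmetric] integrable_continuous_real cdiag
        continuous_on_triangle_integral_upto[OF cFxz])
  finally show ?thesis .
qed

lemma has_real_derivative_integral_upto:
  fixes F Fx :: "real \<Rightarrow> real \<Rightarrow> real"
  assumes cF: "continuous_on Tri (\<lambda>(x, y). F x y)" and cFx: "continuous_on Tri (\<lambda>(x, y). Fx x y)"
    and dF: "\<And>\<xi> y. (\<xi>, y) \<in> Tri \<Longrightarrow> ((\<lambda>\<xi>. F \<xi> y) has_real_derivative Fx \<xi> y) (at \<xi> within {y..1})"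
    and x: "x \<in> {0..1}"
  shows "((\<lambda>x. integral {0..x} (F x)) has_real_derivative (F x x + integral {0..x} (Fx x)))
           (at x within {0..1})"
proof -
  have "continuous_on {0..1} (\<lambda>\<xi>. F \<xi> \<xi>)"
    by (rule continuous_on_compose2[OF cF, where f="\<lambda>s. (s, s)", simplified])
       (auto intro!: continuous_intros)
  moreover have "continuous_on {0..1} (\<lambda>\<xi>. integral {0..\<xi>} (Fx \<xi>))"
    by (rule continuous_on_triangle_integral_upto) (use cFx in \<open>simp add: Tri_def\<close>)
  ultimately have "((\<lambda>z. integral {0..z} (\<lambda>\<xi>. F \<xi> \<xi> + integral {0..\<xi>} (Fx \<xi>))) has_real_derivative
      (F x x + integral {0..x} (Fx x))) (at x within {0..1})"
    by (intro integral_has_real_derivative[OF _ x] continuous_on_add)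
  then show ?thesis
    by (rule has_field_derivative_transform_within[OF _ zero_less_one x])
       (use integral_upto_eq_diagonal[OF cF cFx dF] in simp)
qed

lemma continuous_on_Tri_slice:
  fixes a :: "real \<times> real \<Rightarrow> real"
  assumes "continuous_on Tri a" and "x \<in> {0..1}"
  shows "continuous_on {0..x} (\<lambda>y. a (x, y))"
  by (rule continuous_on_compose2[OF assms(1)]) (use assms(2) in \<open>auto intro!: continuous_intros\<close>)

lemma compact_Tri: "compact Tri"
proof -
  have "Tri = {p. 0 \<le> snd p} \<inter> {p. snd p \<le> fst p} \<inter> {p. fst p \<le> (1::real)}"
    by auto
  moreover have "closed ({p. 0 \<le> snd p} \<inter> {p. snd p \<le> fst p} \<inter> {p. fst p \<le> (1::real)})"
    by (intro closed_Int; rule closed_Collect_le; intro continuous_intros)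
  moreover have "bounded Tri"
    by (rule bounded_subset[OF bounded_cbox[of "(0, 0)" "(1, 1)"]]) (force simp: cbox_Pair_eq)
  ultimately show ?thesis by (simp add: compact_eq_bounded_closed)
qed

lemma continuous_on_Tri_bounded:
  fixes h :: "real \<times> real \<Rightarrow> real"
  assumes "continuous_on Tri h"
  obtains C where "\<And>p. p \<in> Tri \<Longrightarrow> \<bar>h p\<bar> \<le> C"
  using compact_imp_bounded[OF compact_continuous_image[OF assms compact_Tri]]
  by (auto simp: bounded_iff)

lemma power_fact_tendsto_0: "(\<lambda>n. C * a ^ n / fact n :: real) \<longlonglongrightarrow> 0"
proof -
  have "(\<lambda>n. C * (a ^ n /\<^sub>R fact n) :: real) \<longlonglongrightarrow> C * 0"
    by (intro tendsto_mult tendsto_const summable_LIMSEQ_zero[OF summable_exp_generic])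
  then show ?thesis by (simp add: divide_inverse mult_ac)
qed

lemma power_Suc_fact_sums: "(\<lambda>n. B ^ Suc n / fact n) sums (B * exp B :: real)"
proof -
  have "(\<lambda>n. B * (B ^ n /\<^sub>R fact n)) sums (B * exp B)"
    by (rule sums_mult[OF exp_converges])
  moreover have "(\<lambda>n. B * (B ^ n /\<^sub>R fact n)) = (\<lambda>n. B ^ Suc n / fact n)"
    by (rule ext) (simp add: field_simps)
  ultimately show ?thesis by simp
qed

lemma summable_power_Suc_fact: "summable (\<lambda>n. B ^ Suc n / fact n :: real)"
  using power_Suc_fact_sums by (rule sums_summable)

lemma integral_suminf_sums:
  fixes g :: "nat \<Rightarrow> real \<Rightarrow> real"
  assumes cg: "\<And>i. continuous_on {a..b} (g i)"
    and bound: "\<And>i s. s \<in> {a..b} \<Longrightarrow> \<bar>g i s\<bar> \<le> M i" and M: "summable M"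
  shows "(\<lambda>i. integral {a..b} (g i)) sums integral {a..b} (\<lambda>s. \<Sum>i. g i s)"
proof -
  have "uniform_limit {a..b} (\<lambda>n s. \<Sum>i<n. g i s) (\<lambda>s. \<Sum>i. g i s) sequentially"
    by (rule Weierstrass_m_test[OF _ M]) (simp add: bound)
  then obtain I J where I: "\<And>n. ((\<lambda>s. \<Sum>i<n. g i s) has_integral I n) {a..b}"
    and J: "((\<lambda>s. \<Sum>i. g i s) has_integral J) {a..b}" and IJ: "I \<longlonglongrightarrow> J"
    by (rule uniform_limit_integral) (auto intro!: continuous_on_sum cg)
  have "((\<lambda>s. \<Sum>i<n. g i s) has_integral (\<Sum>i<n. integral {a..b} (g i))) {a..b}" for n
    by (intro has_integral_sum finite_lessThan integrable_integral integrable_continuous_real cg)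
  then have "I = (\<lambda>n. \<Sum>i<n. integral {a..b} (g i))"
    using I has_integral_unique by blast
  then show ?thesis
    using IJ integral_unique[OF J] by (simp add: sums_def)
qed

section \<open>Volterra operators on the triangle\<close>

definition volterra :: "(real \<times> real \<Rightarrow> real) \<Rightarrow> (real \<Rightarrow> real) \<Rightarrow> real \<Rightarrow> real" where
  "volterra a w x = integral {0..x} (\<lambda>y. a (x, y) * w y)"

definition kernel_comp :: "(real \<times> real \<Rightarrow> real) \<Rightarrow> (real \<times> real \<Rightarrow> real) \<Rightarrow> real \<times> real \<Rightarrow> real" where
  "kernel_comp a b = (\<lambda>(x, y). integral {y..x} (\<lambda>s. a (x, s) * b (s, y)))"

(* kernel_power k n is the (n+1)-fold composite; the Neumann series of these is the resolvent. *)
primrec kernel_power :: "(real \<times> real \<Rightarrow> real) \<Rightarrow> nat \<Rightarrow> real \<times> real \<Rightarrow> real" where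
  "kernel_power k 0 = k"
| "kernel_power k (Suc n) = kernel_comp k (kernel_power k n)"

lemma continuous_on_volterra:
  assumes "continuous_on Tri a" "continuous_on {0..1} w"
  shows "continuous_on {0..1} (volterra a w)"
  unfolding volterra_def[abs_def]
  by (rule continuous_on_triangle_integral_upto)
     (auto simp: case_prod_beta Tri_def intro!: continuous_intros continuous_on_compose2[OF assms(1)]
        continuous_on_compose2[OF assms(2)])

lemma continuous_on_kernel_comp:
  assumes ca: "continuous_on Tri a" and cb: "continuous_on Tri b"
  shows "continuous_on Tri (kernel_comp a b)"
proof -
  let ?S = "{(p, s). p \<in> Tri \<and> snd p \<le> s \<and> s \<le> fst p}"
  have "continuous_on ?S (\<lambda>q. a (fst (fst q), snd q) * b (snd q, snd (fst q)))"
    by (intro continuous_intros continuous_on_compose2[OF ca] continuous_on_compose2[OF cb]) auto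
  then have "continuous_on Tri (\<lambda>p. integral {snd p..fst p} (\<lambda>s. a (fst p, s) * b (s, snd p)))"
    by (intro continuous_on_integral_bounds_param[where a=0 and b=1])
       (auto intro!: continuous_intros simp: case_prod_beta)
  then show ?thesis by (simp add: kernel_comp_def case_prod_beta)
qed

locale bounded_kernel =
  fixes k :: "real \<times> real \<Rightarrow> real" and B :: real
  assumes continuous_kernel: "continuous_on Tri k"
    and abs_kernel_le: "\<And>p. p \<in> Tri \<Longrightarrow> \<bar>k p\<bar> \<le> B"
begin

lemma bound_nonneg: "0 \<le> B"
  using abs_kernel_le[of "(0, 0)"] by simp

lemma continuous_on_kernel_power: "continuous_on Tri (kernel_power k n)"
  by (induction n) (simp_all add: continuous_kernel continuous_on_kernel_comp)

lemma abs_kernel_power_le: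
  "(x, y) \<in> Tri \<Longrightarrow> \<bar>kernel_power k n (x, y)\<bar> \<le> B ^ Suc n * (x - y) ^ n / fact n"
proof (induction n arbitrary: x y)
  case 0
  then show ?case using abs_kernel_le by simp
next
  case (Suc n)
  then have T: "0 \<le> y" "y \<le> x" "x \<le> 1" by auto
  have "\<bar>kernel_power k (Suc n) (x, y)\<bar> = \<bar>integral {y..x} (\<lambda>s. k (x, s) * kernel_power k n (s, y))\<bar>"
    by (simp add: kernel_comp_def)
  also have "\<dots> \<le> integral {y..x} (\<lambda>s. (B * (B ^ Suc n / fact n)) * (s - y) ^ n)"
  proof (rule abs_integral_le_integral)
    show "(\<lambda>s. k (x, s) * kernel_power k n (s, y)) integrable_on {y..x}"
      using T by (intro integrable_continuous_real continuous_intros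
          continuous_on_compose2[OF continuous_kernel] continuous_on_compose2[OF continuous_on_kernel_power]) auto
    show "(\<lambda>s. (B * (B ^ Suc n / fact n)) * (s - y) ^ n) integrable_on {y..x}"
      by (intro integrable_continuous_real continuous_intros)
    fix s assume s: "s \<in> {y..x}"
    have "\<bar>k (x, s)\<bar> * \<bar>kernel_power k n (s, y)\<bar> \<le> B * (B ^ Suc n * (s - y) ^ n / fact n)"
      using s T abs_kernel_le Suc.IH by (intro mult_mono) (auto simp: bound_nonneg)
    then show "\<bar>k (x, s) * kernel_power k n (s, y)\<bar> \<le> (B * (B ^ Suc n / fact n)) * (s - y) ^ n"
      by (simp add: abs_mult)
  qed
  also have "\<dots> = B ^ Suc (Suc n) * (x - y) ^ Suc n / fact (Suc n)"
    by (simp add: integral_shifted_power[OF T(2)] field_simps)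
  finally show ?case .
qed

lemma abs_kernel_power_le_uniform: "p \<in> Tri \<Longrightarrow> \<bar>kernel_power k n p\<bar> \<le> B ^ Suc n / fact n"
proof (cases p)
  case (Pair x y)
  assume p: "p \<in> Tri"
  then have "\<bar>kernel_power k n p\<bar> \<le> B ^ Suc n * (x - y) ^ n / fact n"
    using abs_kernel_power_le Pair by simp
  also have "\<dots> \<le> B ^ Suc n * 1 / fact n"
    using p Pair bound_nonneg by (intro divide_right_mono mult_left_mono power_le_one) auto
  finally show ?thesis by simp
qed

definition resolvent :: "real \<times> real \<Rightarrow> real" where
  "resolvent p = (\<Sum>n. kernel_power k n p)"

lemma summable_kernel_power: "p \<in> Tri \<Longrightarrow> summable (\<lambda>n. kernel_power k n p)"
  by (rule summable_comparison_test'[OF summable_power_Suc_fact[of B]]) (use abs_kernel_power_le_uniform in auto)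

lemma abs_resolvent_le: "p \<in> Tri \<Longrightarrow> \<bar>resolvent p\<bar> \<le> B * exp B"
proof -
  assume p: "p \<in> Tri"
  have sa: "summable (\<lambda>n. \<bar>kernel_power k n p\<bar>)"
    by (rule summable_comparison_test'[OF summable_power_Suc_fact[of B]]) (use abs_kernel_power_le_uniform p in auto)
  have "\<bar>resolvent p\<bar> \<le> (\<Sum>n. \<bar>kernel_power k n p\<bar>)"
    unfolding resolvent_def by (rule summable_rabs[OF sa])
  also have "\<dots> \<le> (\<Sum>n. B ^ Suc n / fact n)"
    by (rule suminf_le[OF _ sa summable_power_Suc_fact[of B]]) (use abs_kernel_power_le_uniform p in auto)
  also have "\<dots> = B * exp B"
    using power_Suc_fact_sums by (rule sums_unique[symmetric])
  finally show ?thesis .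
qed

lemma continuous_on_resolvent: "continuous_on Tri resolvent"
proof -
  have "uniform_limit Tri (\<lambda>n p. \<Sum>i<n. kernel_power k i p) (\<lambda>p. \<Sum>i. kernel_power k i p) sequentially"
    by (rule Weierstrass_m_test[OF _ summable_power_Suc_fact[of B]]) (use abs_kernel_power_le_uniform in auto)
  then have "continuous_on Tri (\<lambda>p. \<Sum>i. kernel_power k i p)"
    by (rule uniform_limit_theorem[rotated])
       (auto intro!: always_eventually continuous_on_sum continuous_on_kernel_power)
  then show ?thesis unfolding resolvent_def[abs_def] .
qed

lemma resolvent_eq:
  assumes xy: "(x, y) \<in> Tri"
  shows "resolvent (x, y) = k (x, y) + kernel_comp k resolvent (x, y)"
proof -
  have sT: "(x, s) \<in> Tri" "(s, y) \<in> Tri" if "s \<in> {y..x}" for s using xy that by auto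
  have "(\<lambda>i. integral {y..x} (\<lambda>s. k (x, s) * kernel_power k i (s, y)))
      sums integral {y..x} (\<lambda>s. \<Sum>i. k (x, s) * kernel_power k i (s, y))"
  proof (rule integral_suminf_sums[OF _ _ summable_mult[OF summable_power_Suc_fact[of B], of B]])
    show "continuous_on {y..x} (\<lambda>s. k (x, s) * kernel_power k i (s, y))" for i
      by (intro continuous_intros continuous_on_compose2[OF continuous_kernel]
          continuous_on_compose2[OF continuous_on_kernel_power]) (use sT in auto)
    fix i s assume "s \<in> {y..x}"
    then have "\<bar>k (x, s)\<bar> \<le> B" "\<bar>kernel_power k i (s, y)\<bar> \<le> B ^ Suc i / fact i"
      using abs_kernel_le[OF sT(1)] abs_kernel_power_le_uniform[OF sT(2)] by auto
    then show "\<bar>k (x, s) * kernel_power k i (s, y)\<bar> \<le> B * (B ^ Suc i / fact i)"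
      unfolding abs_mult by (intro mult_mono) (auto simp: bound_nonneg)
  qed
  moreover have "integral {y..x} (\<lambda>s. \<Sum>i. k (x, s) * kernel_power k i (s, y)) = kernel_comp k resolvent (x, y)"
    unfolding kernel_comp_def
    by (simp, rule integral_cong) (use xy in \<open>simp add: resolvent_def suminf_mult summable_kernel_power\<close>)
  ultimately have "(\<lambda>i. kernel_power k (Suc i) (x, y)) sums kernel_comp k resolvent (x, y)"
    by (simp add: kernel_comp_def)
  then have "(\<lambda>i. kernel_power k i (x, y)) sums (kernel_comp k resolvent (x, y) + k (x, y))"
    using sums_Suc_iff[of "\<lambda>i. kernel_power k i (x, y)"] by (simp del: kernel_power.simps(2))
  then show ?thesis
    unfolding resolvent_def by (simp add: sums_iff add.commute)
qed

(* With W = w + volterra resolvent w, this says W = w + volterra k W: the resolvent inverts the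
   operator I - volterra k. *)
lemma volterra_resolvent_eq:
  assumes cw: "continuous_on {0..1} w" and x: "x \<in> {0..1}"
  shows "volterra resolvent w x = volterra k (\<lambda>y. w y + volterra resolvent w y) x"
proof -
  have cwx: "continuous_on {0..x} w" by (rule continuous_on_subset[OF cw]) (use x in auto)
  have ckx: "continuous_on {0..x} (\<lambda>y. k (x, y))" by (rule continuous_on_Tri_slice[OF continuous_kernel x])
  have crx: "continuous_on {0..x} (\<lambda>y. resolvent (x, y))"
    by (rule continuous_on_Tri_slice[OF continuous_on_resolvent x])
  have cV: "continuous_on {0..x} (volterra resolvent w)"
    by (rule continuous_on_subset[OF continuous_on_volterra[OF continuous_on_resolvent cw]]) (use x in auto)
  have "integral {0..x} (\<lambda>y. k (x, y) * volterra resolvent w y)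
      = integral {0..x} (\<lambda>y. integral {0..y} (\<lambda>s. k (x, y) * resolvent (y, s) * w s))"
    by (rule integral_cong) (simp add: volterra_def mult.assoc)
  also have "\<dots> = integral {0..x} (\<lambda>s. integral {s..x} (\<lambda>y. k (x, y) * resolvent (y, s) * w s))"
    by (rule integral_swap_triangle)
       (use x in \<open>auto simp: case_prod_beta intro!: continuous_intros continuous_on_compose2[OF continuous_kernel]
          continuous_on_compose2[OF continuous_on_resolvent] continuous_on_compose2[OF cw]\<close>)
  also have "\<dots> = integral {0..x} (\<lambda>s. (resolvent (x, s) - k (x, s)) * w s)"
  proof (rule integral_cong)
    fix s assume s: "s \<in> {0..x}"
    have "integral {s..x} (\<lambda>y. k (x, y) * resolvent (y, s) * w s)
        = integral {s..x} (\<lambda>y. k (x, y) * resolvent (y, s)) * w s"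
      by (rule integral_mult_left)
    also have "integral {s..x} (\<lambda>y. k (x, y) * resolvent (y, s)) = resolvent (x, s) - k (x, s)"
      using resolvent_eq[of x s] s x by (auto simp: kernel_comp_def)
    finally show "integral {s..x} (\<lambda>y. k (x, y) * resolvent (y, s) * w s) = (resolvent (x, s) - k (x, s)) * w s" .
  qed
  finally have kV: "integral {0..x} (\<lambda>y. k (x, y) * volterra resolvent w y)
      = integral {0..x} (\<lambda>s. (resolvent (x, s) - k (x, s)) * w s)" .
  have "volterra k (\<lambda>y. w y + volterra resolvent w y) x
      = integral {0..x} (\<lambda>y. k (x, y) * w y) + integral {0..x} (\<lambda>y. k (x, y) * volterra resolvent w y)"
    unfolding volterra_def[of k] distrib_left
    by (intro integral_add integrable_continuous_real continuous_intros ckx cwx cV)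
  also have "\<dots> = integral {0..x} (\<lambda>y. k (x, y) * w y + (resolvent (x, y) - k (x, y)) * w y)"
    unfolding kV
    by (intro integral_add[symmetric] integrable_continuous_real continuous_intros ckx cwx crx)
  also have "\<dots> = volterra resolvent w x"
    by (simp add: volterra_def algebra_simps)
  finally show ?thesis ..
qed

lemma abs_volterra_fixed_point_le:
  assumes cR: "continuous_on {0..1} R"
    and eq: "\<And>x. x \<in> {0..1} \<Longrightarrow> R x = volterra k R x"
    and C: "\<And>x. x \<in> {0..1} \<Longrightarrow> \<bar>R x\<bar> \<le> C"
  shows "x \<in> {0..1} \<Longrightarrow> \<bar>R x\<bar> \<le> C * (B * x) ^ n / fact n"
proof (induction n arbitrary: x)
  case 0
  then show ?case using C by simp
next
  case (Suc n)
  have "\<bar>R x\<bar> = \<bar>integral {0..x} (\<lambda>y. k (x, y) * R y)\<bar>"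
    using eq[OF Suc.prems] by (simp add: volterra_def)
  also have "\<dots> \<le> integral {0..x} (\<lambda>y. (B * C * B ^ n / fact n) * (y - 0) ^ n)"
  proof (rule abs_integral_le_integral)
    show "(\<lambda>y. k (x, y) * R y) integrable_on {0..x}"
      using Suc.prems by (intro integrable_continuous_real continuous_intros
          continuous_on_Tri_slice[OF continuous_kernel] continuous_on_subset[OF cR]) auto
    show "(\<lambda>y. (B * C * B ^ n / fact n) * (y - 0) ^ n) integrable_on {0..x}"
      by (intro integrable_continuous_real continuous_intros)
    fix y assume y: "y \<in> {0..x}"
    have "\<bar>k (x, y)\<bar> * \<bar>R y\<bar> \<le> B * (C * (B * y) ^ n / fact n)"
      using abs_kernel_le Suc.IH y Suc.prems by (intro mult_mono) (auto simp: bound_nonneg)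
    then show "\<bar>k (x, y) * R y\<bar> \<le> (B * C * B ^ n / fact n) * (y - 0) ^ n"
      by (simp add: abs_mult power_mult_distrib)
  qed
  also have "\<dots> = (B * C * B ^ n / fact n) * (x ^ Suc n / Suc n)"
    using integral_shifted_power[of 0 x n] Suc.prems by simp
  also have "\<dots> = C * (B * x) ^ Suc n / fact (Suc n)"
    by (simp add: field_simps power_mult_distrib)
  finally show ?case .
qed

lemma volterra_homogeneous_eq_0:
  assumes cR: "continuous_on {0..1} R"
    and eq: "\<And>x. x \<in> {0..1} \<Longrightarrow> R x = volterra k R x"
    and x: "x \<in> {0..1}"
  shows "R x = 0"
proof -
  obtain C where C: "\<And>x. x \<in> {0..1} \<Longrightarrow> \<bar>R x\<bar> \<le> C"
    using compact_imp_bounded[OF compact_continuous_image[OF cR compact_Icc]]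
    by (auto simp: bounded_iff) (metis atLeastAtMost_iff)
  have "\<bar>R x\<bar> \<le> 0"
    by (rule LIMSEQ_le_const[OF power_fact_tendsto_0])
       (use abs_volterra_fixed_point_le[OF cR eq C x] in auto)
  then show ?thesis by simp
qed

end

section \<open>Differentiable functions of two variables and the Goursat kernel\<close>

lemma bounded_linear_real_pair:
  fixes L :: "real \<times> real \<Rightarrow> real"
  assumes "bounded_linear L"
  shows "L (u, v) = u * L (1, 0) + v * L (0, 1)"
proof -
  have lin: "linear L" using assms by (rule bounded_linear.linear)
  have "L (u, v) = L (u *\<^sub>R (1, 0) + v *\<^sub>R (0, 1))" by simp
  also have "\<dots> = u *\<^sub>R L (1, 0) + v *\<^sub>R L (0, 1)"
    by (simp only: linear_add[OF lin] linear_scale[OF lin])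
  finally show ?thesis by simp
qed

lemma C1_with_continuous_on: "C1_with h h' S \<Longrightarrow> continuous_on S h"
  unfolding C1_with_def continuous_on_eq_continuous_within
  by (auto intro: has_derivative_continuous)

lemma C1_with_continuous_on_derivative: "C1_with h h' S \<Longrightarrow> continuous_on S (\<lambda>p. h' p v)"
  by (cases v) (simp add: C1_with_def)

lemma C1_with_chain:
  fixes h :: "real \<times> real \<Rightarrow> real"
  assumes C1: "C1_with h h' S"
    and \<gamma>: "(\<gamma> has_derivative (\<lambda>t. (t * da, t * db))) (at s within I)"
    and sub: "\<gamma> ` I \<subseteq> S" and s: "s \<in> I"
  shows "((\<lambda>s. h (\<gamma> s)) has_real_derivative (da * h' (\<gamma> s) (1, 0) + db * h' (\<gamma> s) (0, 1)))
           (at s within I)"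
proof -
  have hd: "\<And>p. p \<in> S \<Longrightarrow> (h has_derivative h' p) (at p within S)"
    using C1 by (auto simp: C1_with_def)
  have "\<gamma> s \<in> S" using sub s by blast
  then have bl: "bounded_linear (h' (\<gamma> s))"
    by (rule has_derivative_bounded_linear[OF hd])
  have "(\<lambda>t. h' (\<gamma> s) (t * da, t * db)) = (\<lambda>t. (da * h' (\<gamma> s) (1, 0) + db * h' (\<gamma> s) (0, 1)) * t)"
  proof (rule ext)
    fix t
    show "h' (\<gamma> s) (t * da, t * db) = (da * h' (\<gamma> s) (1, 0) + db * h' (\<gamma> s) (0, 1)) * t"
      using bounded_linear_real_pair[OF bl, of "t * da" "t * db"]
      by (simp only: algebra_simps)
  qed
  then show ?thesis
    using has_derivative_in_compose2[OF hd sub s \<gamma>] unfolding has_field_derivative_def by simp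
qed

lemma C1_with_partial_fst:
  assumes "C1_with h h' S" "\<And>\<xi>. \<xi> \<in> I \<Longrightarrow> (\<xi>, y) \<in> S" "x \<in> I"
  shows "((\<lambda>\<xi>. h (\<xi>, y)) has_real_derivative h' (x, y) (1, 0)) (at x within I)"
proof -
  have "((\<lambda>\<xi>. (\<xi>, y)) has_derivative (\<lambda>t. (t * 1, t * 0))) (at x within I)"
    by (auto intro!: derivative_eq_intros)
  from C1_with_chain[OF assms(1) this _ assms(3)] assms(2) show ?thesis by auto
qed

lemma C1_with_partial_snd:
  assumes "C1_with h h' S" "\<And>\<eta>. \<eta> \<in> I \<Longrightarrow> (x, \<eta>) \<in> S" "y \<in> I"
  shows "((\<lambda>\<eta>. h (x, \<eta>)) has_real_derivative h' (x, y) (0, 1)) (at y within I)"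
proof -
  have "((\<lambda>\<eta>. (x, \<eta>)) has_derivative (\<lambda>t. (t * 0, t * 1))) (at y within I)"
    by (auto intro!: derivative_eq_intros)
  from C1_with_chain[OF assms(1) this _ assms(3)] assms(2) show ?thesis by auto
qed

lemma C1_with_diagonal:
  assumes "C1_with h h' S" "\<And>s. s \<in> I \<Longrightarrow> (x + s, y + s) \<in> S" "s \<in> I"
  shows "((\<lambda>s. h (x + s, y + s)) has_real_derivative
           (h' (x + s, y + s) (1, 0) + h' (x + s, y + s) (0, 1))) (at s within I)"
proof -
  have "((\<lambda>s. (x + s, y + s)) has_derivative (\<lambda>t. (t * 1, t * 1))) (at s within I)"
    by (auto intro!: derivative_eq_intros)
  from C1_with_chain[OF assms(1) this _ assms(3)] assms(2) show ?thesis by auto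
qed

lemma integral_picard_majorant:
  fixes M c r :: real
  assumes r: "0 \<le> r"
  shows "integral {0..r} (\<lambda>s. M + M * ((exp (M * (r - s)) - 1) + c * (r - s) ^ n))
       = (exp (M * r) - 1) + M * c * r ^ Suc n / Suc n"
proof -
  let ?P = "\<lambda>s. - exp (M * (r - s)) - M * c * (r - s) ^ Suc n / Suc n"
  have "((\<lambda>s. M + M * ((exp (M * (r - s)) - 1) + c * (r - s) ^ n)) has_integral (?P r - ?P 0)) {0..r}"
  proof (rule fundamental_theorem_of_calculus[OF r])
    fix s assume "s \<in> {0..r}"
    have "(?P has_real_derivative (- (exp (M * (r - s)) * (M * (0 - 1))) -
            M * c * (Suc n * (r - s) ^ n * (0 - 1)) / Suc n)) (at s within {0..r})"
      by (rule derivative_eq_intros refl | simp del: of_nat_Suc)+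
    then show "(?P has_vector_derivative (M + M * ((exp (M * (r - s)) - 1) + c * (r - s) ^ n)))
        (at s within {0..r})"
      by (simp add: has_real_derivative_iff_has_vector_derivative algebra_simps del: of_nat_Suc)
  qed
  then show ?thesis by (simp add: integral_unique)
qed

locale goursat_kernel =
  fixes f k :: "real \<times> real \<Rightarrow> real" and k' :: "real \<times> real \<Rightarrow> real \<times> real \<Rightarrow> real" and Mf :: real
  assumes continuous_f: "continuous_on Tri f"
    and abs_f_le: "\<And>p. p \<in> Tri \<Longrightarrow> \<bar>f p\<bar> \<le> Mf"
    and k_C1: "C1_with k k' Tri"
    and k_pde: "\<forall>x y. (x, y) \<in> Tri \<longrightarrow>
        k' (x, y) (0, 1) + k' (x, y) (1, 0) = f (x, y) - integral {y..x} (\<lambda>\<eta>. f (x, \<eta>) * k (\<eta>, y))"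
    and k_bc: "\<forall>y\<in>{0..1}. k (1, y) = 0"
begin

lemma Mf_nonneg: "0 \<le> Mf"
  using abs_f_le[of "(0, 0)"] by simp

lemma continuous_on_k: "continuous_on Tri k"
  using k_C1 by (rule C1_with_continuous_on)

lemma continuous_on_k': "continuous_on Tri (\<lambda>p. k' p v)"
  using k_C1 by (rule C1_with_continuous_on_derivative)

lemma k_along_characteristic:
  assumes xy: "(x, y) \<in> Tri"
  shows "k (x, y) = - integral {0..1-x} (\<lambda>s. k' (x + s, y + s) (1, 0) + k' (x + s, y + s) (0, 1))"
proof -
  have "((\<lambda>s. k' (x + s, y + s) (1, 0) + k' (x + s, y + s) (0, 1)) has_integral
          (k (x + (1 - x), y + (1 - x)) - k (x + 0, y + 0))) {0..1-x}"
  proof (rule fundamental_theorem_of_calculus)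
    fix s assume s: "s \<in> {0..1-x}"
    have "\<And>s. s \<in> {0..1-x} \<Longrightarrow> (x + s, y + s) \<in> Tri" using xy by auto
    from C1_with_diagonal[OF k_C1 this s]
    show "((\<lambda>s. k (x + s, y + s)) has_vector_derivative
        (k' (x + s, y + s) (1, 0) + k' (x + s, y + s) (0, 1))) (at s within {0..1-x})"
      by (simp add: has_real_derivative_iff_has_vector_derivative)
  qed (use xy in simp)
  moreover have "k (x + (1 - x), y + (1 - x)) = 0" using k_bc xy by auto
  ultimately show ?thesis by (simp add: integral_unique)
qed

lemma abs_k_characteristic_derivative_le:
  assumes hk: "\<And>a b. (a, b) \<in> Tri \<Longrightarrow> \<bar>k (a, b)\<bar> \<le> g (1 - b)"
    and g0: "\<And>r. r \<in> {0..1} \<Longrightarrow> 0 \<le> g r"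
    and ab: "(a, b) \<in> Tri"
  shows "\<bar>k' (a, b) (1, 0) + k' (a, b) (0, 1)\<bar> \<le> Mf + Mf * g (1 - b)"
proof -
  have "\<bar>integral {b..a} (\<lambda>\<eta>. f (a, \<eta>) * k (\<eta>, b))\<bar> \<le> integral {b..a} (\<lambda>\<eta>. Mf * g (1 - b))"
  proof (rule abs_integral_le_integral)
    show "(\<lambda>\<eta>. f (a, \<eta>) * k (\<eta>, b)) integrable_on {b..a}"
      using ab by (intro integrable_continuous_real continuous_intros
          continuous_on_compose2[OF continuous_f] continuous_on_compose2[OF continuous_on_k]) auto
    show "(\<lambda>\<eta>. Mf * g (1 - b)) integrable_on {b..a}"
      by (intro integrable_continuous_real continuous_intros)
    fix \<eta> assume "\<eta> \<in> {b..a}"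
    then have a\<eta>: "(a, \<eta>) \<in> Tri" and \<eta>b: "(\<eta>, b) \<in> Tri" using ab by auto
    have "\<bar>f (a, \<eta>)\<bar> * \<bar>k (\<eta>, b)\<bar> \<le> Mf * g (1 - b)"
      using abs_f_le[OF a\<eta>] hk[OF \<eta>b] Mf_nonneg by (intro mult_mono) auto
    then show "\<bar>f (a, \<eta>) * k (\<eta>, b)\<bar> \<le> Mf * g (1 - b)" by (simp add: abs_mult)
  qed
  also have "\<dots> = (a - b) * (Mf * g (1 - b))" using ab by simp
  also have "\<dots> \<le> 1 * (Mf * g (1 - b))"
    using ab g0[of "1 - b"] Mf_nonneg by (intro mult_right_mono) auto
  finally have "\<bar>integral {b..a} (\<lambda>\<eta>. f (a, \<eta>) * k (\<eta>, b))\<bar> \<le> Mf * g (1 - b)"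
    by simp
  moreover have "k' (a, b) (0, 1) + k' (a, b) (1, 0) = f (a, b) - integral {b..a} (\<lambda>\<eta>. f (a, \<eta>) * k (\<eta>, b))"
    using k_pde ab by blast
  ultimately show ?thesis
    using abs_f_le[OF ab] abs_triangle_ineq4[of "f (a, b)" "integral {b..a} (\<lambda>\<eta>. f (a, \<eta>) * k (\<eta>, b))"]
    by (simp add: add.commute)
qed

lemma abs_k_le_picard_step:
  assumes hk: "\<And>a b. (a, b) \<in> Tri \<Longrightarrow> \<bar>k (a, b)\<bar> \<le> g (1 - b)"
    and cg: "continuous_on {0..1} g" and g0: "\<And>r. r \<in> {0..1} \<Longrightarrow> 0 \<le> g r"
    and xy: "(x, y) \<in> Tri"
  shows "\<bar>k (x, y)\<bar> \<le> integral {0..1-y} (\<lambda>s. Mf + Mf * g (1 - y - s))"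
proof -
  let ?G = "\<lambda>s. Mf + Mf * g (1 - y - s)"
  have iG: "?G integrable_on {0..1-y}"
    by (intro integrable_continuous_real continuous_intros continuous_on_compose2[OF cg]) (use xy in auto)
  have "\<bar>k (x, y)\<bar> \<le> integral {0..1-x} ?G"
    unfolding k_along_characteristic[OF xy] abs_minus_cancel
  proof (rule abs_integral_le_integral)
    show "(\<lambda>s. k' (x + s, y + s) (1, 0) + k' (x + s, y + s) (0, 1)) integrable_on {0..1-x}"
      using xy by (intro integrable_continuous_real continuous_intros
          continuous_on_compose2[OF continuous_on_k']) auto
    show "?G integrable_on {0..1-x}"
      by (rule integrable_subinterval_real[OF iG]) (use xy in auto)
    fix s assume "s \<in> {0..1-x}"
    then have "(x + s, y + s) \<in> Tri" using xy by auto
    from abs_k_characteristic_derivative_le[OF hk g0 this]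
    show "\<bar>k' (x + s, y + s) (1, 0) + k' (x + s, y + s) (0, 1)\<bar> \<le> ?G s"
      by (simp add: algebra_simps)
  qed
  also have "\<dots> \<le> integral {0..1-y} ?G"
  proof -
    have "integral {0..1-x} ?G + integral {1-x..1-y} ?G = integral {0..1-y} ?G"
      by (rule Henstock_Kurzweil_Integration.integral_combine[OF _ _ iG]) (use xy in auto)
    moreover have "0 \<le> integral {1-x..1-y} ?G"
      using g0 Mf_nonneg xy
      by (intro integral_nonneg integrable_subinterval_real[OF iG]) auto
    ultimately show ?thesis by linarith
  qed
  finally show ?thesis .
qed

lemma abs_k_le_iterate:
  assumes C: "\<And>p. p \<in> Tri \<Longrightarrow> \<bar>k p\<bar> \<le> C"
  shows "(x, y) \<in> Tri \<Longrightarrow> \<bar>k (x, y)\<bar> \<le> (exp (Mf * (1 - y)) - 1) + C * (Mf * (1 - y)) ^ n / fact n"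
proof (induction n arbitrary: x y)
  case 0
  have "0 \<le> Mf * (1 - y)" using 0 Mf_nonneg by simp
  then have "1 \<le> exp (Mf * (1 - y))" by simp
  then show ?case using C[OF 0] by (simp del: one_le_exp_iff)
next
  case (Suc n)
  have C0: "0 \<le> C" using C[of "(0, 0)"] by simp
  let ?g = "\<lambda>r. (exp (Mf * r) - 1) + (C * Mf ^ n / fact n) * r ^ n"
  have "\<bar>k (x, y)\<bar> \<le> integral {0..1-y} (\<lambda>s. Mf + Mf * ?g (1 - y - s))"
  proof (rule abs_k_le_picard_step[OF _ _ _ Suc.prems])
    show "\<bar>k (a, b)\<bar> \<le> ?g (1 - b)" if "(a, b) \<in> Tri" for a b
      using Suc.IH[OF that] by (simp add: power_mult_distrib)
    show "0 \<le> ?g r" if "r \<in> {0..1}" for r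
      using that C0 Mf_nonneg by (intro add_nonneg_nonneg) auto
  qed (intro continuous_intros)
  also have "\<dots> = (exp (Mf * (1 - y)) - 1) + Mf * (C * Mf ^ n / fact n) * (1 - y) ^ Suc n / Suc n"
    using Suc.prems by (intro integral_picard_majorant) simp
  also have "\<dots> = (exp (Mf * (1 - y)) - 1) + C * (Mf * (1 - y)) ^ Suc n / fact (Suc n)"
    unfolding power_mult_distrib by (simp add: field_simps)
  finally show ?case .
qed

lemma abs_k_le: "p \<in> Tri \<Longrightarrow> \<bar>k p\<bar> \<le> exp Mf - 1"
proof (cases p)
  case (Pair x y)
  assume p: "p \<in> Tri"
  obtain C where C: "\<And>p. p \<in> Tri \<Longrightarrow> \<bar>k p\<bar> \<le> C"
    using continuous_on_Tri_bounded[OF continuous_on_k] by blast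
  have "(\<lambda>n. (exp (Mf * (1 - y)) - 1) + C * (Mf * (1 - y)) ^ n / fact n) \<longlonglongrightarrow> (exp (Mf * (1 - y)) - 1) + 0"
    by (intro tendsto_add tendsto_const power_fact_tendsto_0)
  then have "\<bar>k (x, y)\<bar> \<le> exp (Mf * (1 - y)) - 1 + 0"
    by (rule LIMSEQ_le_const) (use abs_k_le_iterate[OF C] p Pair in auto)
  also have "\<dots> \<le> exp Mf - 1"
    using p Pair Mf_nonneg by (simp add: mult_left_le)
  finally show ?thesis using Pair by simp
qed

end

section \<open>L2 estimates\<close>

lemma L2norm_cong: "(\<And>x. x \<in> {0..1} \<Longrightarrow> a x = b x) \<Longrightarrow> L2norm a = L2norm b"
  unfolding L2norm_def by (metis (mono_tags, lifting) integral_cong)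

lemma L2norm_nonneg: "0 \<le> L2norm a"
  unfolding L2norm_def
  by (cases "(\<lambda>x. (a x)\<^sup>2) integrable_on {0..1}")
     (auto simp: not_integrable_integral intro!: Henstock_Kurzweil_Integration.integral_nonneg)

lemma integral_square_nonneg:
  fixes w :: "real \<Rightarrow> real"
  assumes "continuous_on {l..h} w"
  shows "0 \<le> integral {l..h} (\<lambda>x. (w x)\<^sup>2)"
  by (rule integral_nonneg) (auto intro!: integrable_continuous_real continuous_intros assms)

lemma integral_square_le_upto_1:
  fixes w :: "real \<Rightarrow> real"
  assumes cw: "continuous_on {0..1} w" and x: "x \<in> {0..1}"
  shows "integral {0..x} (\<lambda>y. (w y)\<^sup>2) \<le> integral {0..1} (\<lambda>y. (w y)\<^sup>2)"
proof -
  have "(\<lambda>y. (w y)\<^sup>2) integrable_on {0..1}"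
    by (intro integrable_continuous_real continuous_intros cw)
  then have "integral {0..x} (\<lambda>y. (w y)\<^sup>2) + integral {x..1} (\<lambda>y. (w y)\<^sup>2) = integral {0..1} (\<lambda>y. (w y)\<^sup>2)"
    by (rule Henstock_Kurzweil_Integration.integral_combine[rotated 2]) (use x in auto)
  moreover have "0 \<le> integral {x..1} (\<lambda>y. (w y)\<^sup>2)"
    by (rule integral_square_nonneg, rule continuous_on_subset[OF cw]) (use x in auto)
  ultimately show ?thesis by linarith
qed

lemma cauchy_schwarz_integral:
  fixes a b :: "real \<Rightarrow> real"
  assumes ca: "continuous_on {l..h} a" and cb: "continuous_on {l..h} b"
  shows "(integral {l..h} (\<lambda>x. a x * b x))\<^sup>2 \<le> integral {l..h} (\<lambda>x. (a x)\<^sup>2) * integral {l..h} (\<lambda>x. (b x)\<^sup>2)"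
proof -
  let ?A = "integral {l..h} (\<lambda>x. (a x)\<^sup>2)"
  let ?C = "integral {l..h} (\<lambda>x. a x * b x)"
  let ?D = "integral {l..h} (\<lambda>x. (b x)\<^sup>2)"
  have quadratic: "0 \<le> ?A - 2 * t * ?C + t\<^sup>2 * ?D" for t
  proof -
    have "0 \<le> integral {l..h} (\<lambda>x. (a x - t * b x)\<^sup>2)"
      by (rule integral_nonneg) (auto intro!: integrable_continuous_real continuous_intros ca cb)
    also have "integral {l..h} (\<lambda>x. (a x - t * b x)\<^sup>2) =
       integral {l..h} (\<lambda>x. (a x)\<^sup>2 - (2 * t) * (a x * b x) + t\<^sup>2 * (b x)\<^sup>2)"
      by (rule integral_cong) (simp add: power2_eq_square algebra_simps)
    also have "\<dots> = ?A - 2 * t * ?C + t\<^sup>2 * ?D"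
      by (intro integral_unique has_integral_add has_integral_diff has_integral_mult_right
          integrable_integral integrable_continuous_real continuous_intros ca cb)
    finally show ?thesis .
  qed
  show ?thesis
  proof (cases "?D = 0")
    case True
    have "?C = 0"
    proof (rule ccontr)
      assume "?C \<noteq> 0"
      with quadratic[of "(?A + 1) / (2 * ?C)"] True show False by simp
    qed
    then show ?thesis using True by simp
  next
    case False
    then have "0 < ?D" using integral_square_nonneg[OF cb] by simp
    moreover have "0 \<le> ?A - 2 * (?C / ?D) * ?C + (?C / ?D)\<^sup>2 * ?D" by (rule quadratic)
    ultimately have "?C\<^sup>2 / ?D \<le> ?A" by (simp add: power2_eq_square field_simps)
    then show ?thesis using \<open>0 < ?D\<close> by (simp add: pos_divide_le_eq)
  qed
qed

lemma L2norm_triangle: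
  fixes a b :: "real \<Rightarrow> real"
  assumes ca: "continuous_on {0..1} a" and cb: "continuous_on {0..1} b"
  shows "L2norm (\<lambda>x. a x + b x) \<le> L2norm a + L2norm b"
proof -
  let ?A = "integral {0..1} (\<lambda>x. (a x)\<^sup>2)"
  let ?C = "integral {0..1} (\<lambda>x. a x * b x)"
  let ?D = "integral {0..1} (\<lambda>x. (b x)\<^sup>2)"
  have A0: "0 \<le> ?A" and D0: "0 \<le> ?D" by (rule integral_square_nonneg[OF ca], rule integral_square_nonneg[OF cb])
  have "integral {0..1} (\<lambda>x. (a x + b x)\<^sup>2) = integral {0..1} (\<lambda>x. (a x)\<^sup>2 + 2 * (a x * b x) + (b x)\<^sup>2)"
    by (rule integral_cong) (simp add: power2_eq_square algebra_simps)
  also have "\<dots> = ?A + 2 * ?C + ?D"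
    by (intro integral_unique has_integral_add has_integral_mult_right integrable_integral
        integrable_continuous_real continuous_intros ca cb)
  finally have expand: "integral {0..1} (\<lambda>x. (a x + b x)\<^sup>2) = ?A + 2 * ?C + ?D" .
  have "\<bar>?C\<bar> \<le> sqrt (?A * ?D)"
    by (rule real_le_rsqrt) (use cauchy_schwarz_integral[OF ca cb] in simp)
  then have "?A + 2 * ?C + ?D \<le> (sqrt ?A + sqrt ?D)\<^sup>2"
    using A0 D0 by (simp add: power2_sum real_sqrt_mult)
  then have "sqrt (?A + 2 * ?C + ?D) \<le> sqrt ?A + sqrt ?D"
    using A0 D0 real_sqrt_le_mono by fastforce
  then show ?thesis unfolding L2norm_def expand .
qed

lemma L2norm_volterra_le:
  fixes a :: "real \<times> real \<Rightarrow> real" and w :: "real \<Rightarrow> real"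
  assumes ca: "continuous_on Tri a" and aK: "\<And>p. p \<in> Tri \<Longrightarrow> \<bar>a p\<bar> \<le> K"
    and cw: "continuous_on {0..1} w"
  shows "L2norm (volterra a w) \<le> K * L2norm w"
proof -
  have K0: "0 \<le> K" using aK[of "(0, 0)"] by simp
  let ?W2 = "integral {0..1} (\<lambda>y. (w y)\<^sup>2)"
  have pointwise: "(volterra a w x)\<^sup>2 \<le> K\<^sup>2 * ?W2" if x: "x \<in> {0..1}" for x
  proof -
    have cwx: "continuous_on {0..x} w" by (rule continuous_on_subset[OF cw]) (use x in auto)
    have cax: "continuous_on {0..x} (\<lambda>y. a (x, y))" by (rule continuous_on_Tri_slice[OF ca x])
    have "integral {0..x} (\<lambda>y. (a (x, y))\<^sup>2) \<le> integral {0..x} (\<lambda>y. K\<^sup>2)"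
    proof (rule integral_le)
      fix y assume "y \<in> {0..x}"
      then have "\<bar>a (x, y)\<bar> \<le> K" using aK x by simp
      then have "\<bar>a (x, y)\<bar>\<^sup>2 \<le> K\<^sup>2" by (rule power_mono) simp
      then show "(a (x, y))\<^sup>2 \<le> K\<^sup>2" by simp
    qed (intro integrable_continuous_real continuous_intros cax)+
    also have "\<dots> \<le> K\<^sup>2" using x by (simp add: mult_left_le_one_le)
    finally have "integral {0..x} (\<lambda>y. (a (x, y))\<^sup>2) \<le> K\<^sup>2" .
    then have "integral {0..x} (\<lambda>y. (a (x, y))\<^sup>2) * integral {0..x} (\<lambda>y. (w y)\<^sup>2) \<le> K\<^sup>2 * ?W2"
      by (intro mult_mono integral_square_le_upto_1[OF cw x] integral_square_nonneg[OF cwx] zero_le_power2)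
    with cauchy_schwarz_integral[OF cax cwx] show ?thesis
      by (simp add: volterra_def)
  qed
  have "integral {0..1} (\<lambda>x. (volterra a w x)\<^sup>2) \<le> integral {0..1} (\<lambda>x::real. K\<^sup>2 * ?W2)"
    by (rule integral_le)
       (auto intro!: integrable_continuous_real continuous_intros continuous_on_volterra ca cw pointwise)
  then have "sqrt (integral {0..1} (\<lambda>x. (volterra a w x)\<^sup>2)) \<le> sqrt (K\<^sup>2 * ?W2)"
    by (simp add: real_sqrt_le_mono)
  also have "\<dots> = K * sqrt ?W2" using K0 by (simp add: real_sqrt_mult)
  finally show ?thesis unfolding L2norm_def .
qed

lemma L2norm_add_volterra_le:
  fixes a :: "real \<times> real \<Rightarrow> real" and w :: "real \<Rightarrow> real"
  assumes ca: "continuous_on Tri a" and aK: "\<And>p. p \<in> Tri \<Longrightarrow> \<bar>a p\<bar> \<le> K"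
    and cw: "continuous_on {0..1} w"
  shows "L2norm (\<lambda>x. w x + volterra a w x) \<le> (1 + K) * L2norm w"
  using L2norm_triangle[OF cw continuous_on_volterra[OF ca cw]] L2norm_volterra_le[OF ca aK cw]
  by (simp add: algebra_simps)

section \<open>Energy of transport solutions\<close>

lemma has_real_derivative_max_0_square:
  "((\<lambda>s. (max 0 (s - a))\<^sup>2) has_real_derivative (2 * max 0 (s - a))) (at s)"
proof (cases "s < a")
  case True
  have "((\<lambda>s. 0::real) has_real_derivative (2 * max 0 (s - a))) (at s)"
    using True by simp
  then show ?thesis
    by (rule has_field_derivative_transform_within_open[where S="{..<a}"]) (use True in auto)
next
  case False
  show ?thesis
  proof (cases "s = a")
    case True
    have "((\<lambda>h. ((max 0 (a + h - a))\<^sup>2 - (max 0 (a - a))\<^sup>2) / h) \<longlongrightarrow> 0) (at 0)"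
    proof (rule Lim_null_comparison)
      show "\<forall>\<^sub>F h in at 0. norm (((max 0 (a + h - a))\<^sup>2 - (max 0 (a - a))\<^sup>2) / h) \<le> \<bar>h\<bar>"
        by (intro always_eventually allI) (auto simp: power2_eq_square abs_mult max_def)
      show "((\<lambda>h::real. \<bar>h\<bar>) \<longlongrightarrow> 0) (at 0)"
        by (rule tendsto_eq_intros refl | simp)+
    qed
    then show ?thesis using True by (simp add: DERIV_def)
  next
    case False
    with \<open>\<not> s < a\<close> have "a < s" by simp
    have "((\<lambda>s. (s - a)\<^sup>2) has_real_derivative (2 * max 0 (s - a))) (at s)"
      using \<open>a < s\<close> by (auto intro!: derivative_eq_intros)
    then show ?thesis
      by (rule has_field_derivative_transform_within_open[where S="{a<..}"]) (use \<open>a < s\<close> in auto)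
  qed
qed

locale transport_solution =
  fixes W Wt :: "real \<Rightarrow> real \<Rightarrow> real"
  assumes continuous_W: "continuous_on ({0..1} \<times> {0..}) (\<lambda>(x, t). W x t)"
    and continuous_Wt: "continuous_on ({0..1} \<times> {0..}) (\<lambda>(x, t). Wt x t)"
    and W_deriv_t: "\<And>x t. x \<in> {0..1} \<Longrightarrow> 0 \<le> t \<Longrightarrow> ((\<lambda>t. W x t) has_real_derivative Wt x t) (at t within {0..})"
    and W_deriv_x: "\<And>x t. x \<in> {0..1} \<Longrightarrow> 0 \<le> t \<Longrightarrow> ((\<lambda>x. W x t) has_real_derivative Wt x t) (at x within {0..1})"
    and W_boundary: "\<And>t. 0 \<le> t \<Longrightarrow> W 1 t = 0"
begin

definition energy :: "(real \<Rightarrow> real) \<Rightarrow> real \<Rightarrow> real" where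
  "energy \<psi> t = integral {0..1} (\<lambda>x. \<psi> (x + t) * (W x t)\<^sup>2)"

lemma continuous_on_W_slice: "0 \<le> t \<Longrightarrow> continuous_on {0..1} (\<lambda>x. W x t)"
  by (rule continuous_on_compose2[OF continuous_W, where f="\<lambda>x. (x, t)", simplified])
     (auto intro!: continuous_intros)

lemma has_real_derivative_energy:
  assumes d\<psi>: "\<And>s. (\<psi> has_real_derivative \<psi>' s) (at s)" and c\<psi>': "continuous_on UNIV \<psi>'"
    and t: "0 \<le> t"
  shows "(energy \<psi> has_real_derivative
            integral {0..1} (\<lambda>x. \<psi>' (x + t) * (W x t)\<^sup>2 + \<psi> (x + t) * (2 * W x t * Wt x t)))
           (at t within {0..})"
proof -
  have c\<psi>: "continuous_on UNIV \<psi>"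
    using d\<psi> by (auto simp: continuous_on_eq_continuous_at intro: DERIV_isCont)
  have cW: "continuous_on ({0..} \<times> {0..1}) (\<lambda>(t, x). W x t)"
    and cWt: "continuous_on ({0..} \<times> {0..1}) (\<lambda>(t, x). Wt x t)"
    using continuous_on_compose[OF continuous_on_swap, of "{0..} \<times> {0..1}" "\<lambda>(x, t). W x t"]
      continuous_on_compose[OF continuous_on_swap, of "{0..} \<times> {0..1}" "\<lambda>(x, t). Wt x t"]
      continuous_W continuous_Wt
    by (auto simp: o_def case_prod_beta product_swap)
  have "((\<lambda>t. integral (cbox 0 1) (\<lambda>x. \<psi> (x + t) * (W x t)\<^sup>2)) has_real_derivative
        integral (cbox 0 1) (\<lambda>x. \<psi>' (x + t) * (W x t)\<^sup>2 + \<psi> (x + t) * (2 * W x t * Wt x t)))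
        (at t within {0..})"
  proof (rule leibniz_rule_field_derivative)
    fix s x :: real assume s: "s \<in> {0..}" and x: "x \<in> cbox 0 1"
    have "((\<lambda>s. \<psi> (x + s)) has_real_derivative \<psi>' (x + s) * 1) (at s within {0..})"
      by (rule DERIV_chain2[OF d\<psi>]) (auto intro!: derivative_eq_intros)
    moreover have "((\<lambda>s. (W x s)\<^sup>2) has_real_derivative (2 * W x s * Wt x s)) (at s within {0..})"
      using DERIV_power[OF W_deriv_t[of x s], of 2] x s by (simp add: cbox_interval mult_ac)
    ultimately show "((\<lambda>s. \<psi> (x + s) * (W x s)\<^sup>2) has_real_derivative
        \<psi>' (x + s) * (W x s)\<^sup>2 + \<psi> (x + s) * (2 * W x s * Wt x s)) (at s within {0..})"
      by (auto intro: derivative_eq_intros)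
  next
    fix s :: real assume "s \<in> {0..}"
    then show "(\<lambda>x. \<psi> (x + s) * (W x s)\<^sup>2) integrable_on cbox 0 1"
      unfolding cbox_interval
      by (intro integrable_continuous_real continuous_intros continuous_on_W_slice
          continuous_on_compose2[OF c\<psi>]) auto
  next
    show "continuous_on ({0..} \<times> cbox 0 1)
        (\<lambda>(s, x). \<psi>' (x + s) * (W x s)\<^sup>2 + \<psi> (x + s) * (2 * W x s * Wt x s))"
      using cW cWt unfolding cbox_interval case_prod_beta
      by (intro continuous_intros continuous_on_compose2[OF c\<psi>] continuous_on_compose2[OF c\<psi>']) auto
  qed (use t in auto)
  then show ?thesis by (simp add: energy_def[abs_def] cbox_interval)
qed

(* As W_t = W_x, the integrand is the x-derivative of psi (x + t) * (W x t)^2, so only the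
   inflow boundary x = 0 contributes. *)
lemma energy_derivative_nonpos:
  assumes d\<psi>: "\<And>s. (\<psi> has_real_derivative \<psi>' s) (at s)" and \<psi>0: "\<And>s. 0 \<le> \<psi> s"
    and t: "0 \<le> t"
  shows "integral {0..1} (\<lambda>x. \<psi>' (x + t) * (W x t)\<^sup>2 + \<psi> (x + t) * (2 * W x t * Wt x t)) \<le> 0"
proof -
  have "((\<lambda>x. \<psi>' (x + t) * (W x t)\<^sup>2 + \<psi> (x + t) * (2 * W x t * Wt x t)) has_integral
          (\<psi> (1 + t) * (W 1 t)\<^sup>2 - \<psi> (0 + t) * (W 0 t)\<^sup>2)) {0..1}"
  proof (rule fundamental_theorem_of_calculus)
    fix x :: real assume x: "x \<in> {0..1}"
    have "((\<lambda>x. \<psi> (x + t)) has_real_derivative \<psi>' (x + t) * 1) (at x within {0..1})"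
      by (rule DERIV_chain2[OF d\<psi>]) (auto intro!: derivative_eq_intros)
    moreover have "((\<lambda>x. (W x t)\<^sup>2) has_real_derivative (2 * W x t * Wt x t)) (at x within {0..1})"
      using DERIV_power[OF W_deriv_x[OF x t], of 2] by (simp add: mult_ac)
    ultimately show "((\<lambda>x. \<psi> (x + t) * (W x t)\<^sup>2) has_vector_derivative
        (\<psi>' (x + t) * (W x t)\<^sup>2 + \<psi> (x + t) * (2 * W x t * Wt x t))) (at x within {0..1})"
      unfolding has_real_derivative_iff_has_vector_derivative[symmetric]
      by (auto intro: derivative_eq_intros)
  qed simp
  then show ?thesis
    using W_boundary[OF t] \<psi>0[of t] by (simp add: integral_unique)
qed

lemma energy_antimono:
  assumes d\<psi>: "\<And>s. (\<psi> has_real_derivative \<psi>' s) (at s)" and c\<psi>': "continuous_on UNIV \<psi>'"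
    and \<psi>0: "\<And>s. 0 \<le> \<psi> s" and ab: "0 \<le> a" "a \<le> b"
  shows "energy \<psi> b \<le> energy \<psi> a"
proof -
  let ?E' = "\<lambda>t. integral {0..1} (\<lambda>x. \<psi>' (x + t) * (W x t)\<^sup>2 + \<psi> (x + t) * (2 * W x t * Wt x t))"
  have "(?E' has_integral (energy \<psi> b - energy \<psi> a)) {a..b}"
  proof (rule fundamental_theorem_of_calculus[OF ab(2)])
    fix t assume "t \<in> {a..b}"
    then show "(energy \<psi> has_vector_derivative ?E' t) (at t within {a..b})"
      using has_real_derivative_energy[OF d\<psi> c\<psi>', of t] ab
      by (auto simp: has_real_derivative_iff_has_vector_derivative[symmetric] intro: DERIV_subset)
  qed
  then have "energy \<psi> b - energy \<psi> a \<le> 0"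
    by (rule has_integral_le[OF _ has_integral_0])
       (use energy_derivative_nonpos[OF d\<psi> \<psi>0] ab in auto)
  then show ?thesis by simp
qed

lemma L2norm_W_antimono: "0 \<le> t \<Longrightarrow> L2norm (\<lambda>x. W x t) \<le> L2norm (\<lambda>x. W x 0)"
  using energy_antimono[of "\<lambda>_. 1" "\<lambda>_. 0" 0 t]
  by (simp add: energy_def L2norm_def real_sqrt_le_mono)

(* The weight (max 0 (s - 1))^2 vanishes for s <= 1, so the initial energy is zero, while
   at time t >= 1 it is positive at x + t for every x > 0. *)
lemma W_eq_0_after_1:
  assumes t: "1 \<le> t" and x: "x \<in> {0..1}"
  shows "W x t = 0"
proof -
  let ?\<psi> = "\<lambda>s::real. (max 0 (s - 1))\<^sup>2"
  let ?h = "\<lambda>x. ?\<psi> (x + t) * (W x t)\<^sup>2"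
  have t0: "0 \<le> t" using t by simp
  have ch: "continuous_on {0..1} ?h"
    by (intro continuous_intros continuous_on_W_slice t0)
  have "energy ?\<psi> t \<le> energy ?\<psi> 0"
    by (rule energy_antimono[OF has_real_derivative_max_0_square]) (auto intro!: continuous_intros t0)
  also have "energy ?\<psi> 0 = 0"
    unfolding energy_def by (subst integral_cong[where g="\<lambda>_. 0"]) auto
  finally have "integral {0..1} ?h = 0"
    using integral_nonneg[OF integrable_continuous_real[OF ch]] by (simp add: energy_def)
  then have h0: "?h z = 0" if "z \<in> {0..1}" for z
    using has_integral_0_cbox_imp_0[of 0 1 ?h z] ch integrable_integral[OF integrable_continuous_real[OF ch]] that
    by (simp add: cbox_interval)
  have "{0<..1} \<subseteq> {z \<in> {0..1}. W z t = 0}"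
  proof
    fix z :: real assume z: "z \<in> {0<..1}"
    then show "z \<in> {z \<in> {0..1}. W z t = 0}" using h0[of z] t by auto
  qed
  moreover have "closed {z \<in> {0..1}. W z t = 0}"
    by (rule continuous_closed_preimage_constant[OF continuous_on_W_slice[OF t0]]) simp
  ultimately have "closure {0<..(1::real)} \<subseteq> {z \<in> {0..1}. W z t = 0}"
    by (rule closure_minimal)
  then show ?thesis using x by auto
qed

end

section \<open>The backstepping transformation\<close>

context goursat_kernel
begin

(* The Goursat equation turns the weighted integral of k_x + k_y into f minus a composite
   term, and swapping that double integral reproduces the Volterra equation for Wf. *)
lemma integral_k_characteristic_derivative:
  fixes E Wf :: "real \<Rightarrow> real"
  assumes cE: "continuous_on {0..1} E" and cWf: "continuous_on {0..1} Wf"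
    and Wf_eq: "\<And>x. x \<in> {0..1} \<Longrightarrow> Wf x = E x + volterra k Wf x"
    and x: "x \<in> {0..1}"
  shows "integral {0..x} (\<lambda>y. (k' (x, y) (1, 0) + k' (x, y) (0, 1)) * Wf y) = integral {0..x} (\<lambda>y. f (x, y) * E y)"
proof -
  have sub: "{0..x} \<subseteq> {0..1}" using x by auto
  note cont = continuous_on_subset[OF cE sub] continuous_on_subset[OF cWf sub]
    continuous_on_Tri_slice[OF continuous_f x] continuous_on_Tri_slice[OF continuous_on_k' x]
  define \<Phi> where "\<Phi> y = integral {y..x} (\<lambda>\<eta>. f (x, \<eta>) * k (\<eta>, y))" for y
  have \<Phi>_eq: "k' (x, y) (1, 0) + k' (x, y) (0, 1) = f (x, y) - \<Phi> y" if "y \<in> {0..x}" for y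
    using k_pde that x by (auto simp: \<Phi>_def add.commute)
  have "integral {0..x} (\<lambda>y. \<Phi> y * Wf y) = integral {0..x} (\<lambda>y. integral {y..x} (\<lambda>\<eta>. f (x, \<eta>) * k (\<eta>, y) * Wf y))"
    by (rule integral_cong) (simp add: \<Phi>_def integral_mult_left)
  also have "\<dots> = integral {0..x} (\<lambda>\<eta>. integral {0..\<eta>} (\<lambda>y. f (x, \<eta>) * k (\<eta>, y) * Wf y))"
    by (rule integral_swap_triangle[symmetric])
       (use x in \<open>auto simp: case_prod_beta intro!: continuous_intros continuous_on_compose2[OF continuous_f]
          continuous_on_compose2[OF continuous_on_k] continuous_on_compose2[OF cWf]\<close>)
  also have "\<dots> = integral {0..x} (\<lambda>\<eta>. f (x, \<eta>) * Wf \<eta> - f (x, \<eta>) * E \<eta>)"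
  proof (rule integral_cong)
    fix \<eta> assume "\<eta> \<in> {0..x}"
    then have "integral {0..\<eta>} (\<lambda>y. k (\<eta>, y) * Wf y) = Wf \<eta> - E \<eta>"
      using Wf_eq[of \<eta>] x by (simp add: volterra_def)
    then show "integral {0..\<eta>} (\<lambda>y. f (x, \<eta>) * k (\<eta>, y) * Wf y) = f (x, \<eta>) * Wf \<eta> - f (x, \<eta>) * E \<eta>"
      by (simp add: mult.assoc integral_mult_right right_diff_distrib)
  qed
  finally have "integral {0..x} (\<lambda>y. \<Phi> y * Wf y) =
      integral {0..x} (\<lambda>y. f (x, y) * Wf y) - integral {0..x} (\<lambda>y. f (x, y) * E y)"
    by (simp add: integral_diff integrable_continuous_real continuous_intros cont)
  moreover have "integral {0..x} (\<lambda>y. (k' (x, y) (1, 0) + k' (x, y) (0, 1)) * Wf y) =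
      integral {0..x} (\<lambda>y. f (x, y) * Wf y) - integral {0..x} (\<lambda>y. \<Phi> y * Wf y)"
  proof -
    have c\<Phi>: "continuous_on {0..x} \<Phi>"
      by (rule continuous_on_eq[where f="\<lambda>y. f (x, y) - (k' (x, y) (1, 0) + k' (x, y) (0, 1))"])
         (auto intro!: continuous_intros cont simp: \<Phi>_eq)
    have "integral {0..x} (\<lambda>y. (k' (x, y) (1, 0) + k' (x, y) (0, 1)) * Wf y) =
        integral {0..x} (\<lambda>y. f (x, y) * Wf y - \<Phi> y * Wf y)"
      by (rule integral_cong) (simp add: \<Phi>_eq algebra_simps)
    then show ?thesis
      by (simp add: integral_diff integrable_continuous_real continuous_intros cont c\<Phi>)
  qed
  ultimately show ?thesis by simp
qed

lemma volterra_k_by_parts: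
  fixes Wf Wx :: "real \<Rightarrow> real"
  assumes cWf: "continuous_on {0..1} Wf" and cWx: "continuous_on {0..1} Wx"
    and dWf: "\<And>x. x \<in> {0..1} \<Longrightarrow> (Wf has_real_derivative Wx x) (at x within {0..1})"
    and x: "x \<in> {0..1}"
  shows "volterra k Wx x = k (x, x) * Wf x - k (x, 0) * Wf 0 - integral {0..x} (\<lambda>y. k' (x, y) (0, 1) * Wf y)"
proof -
  have sub: "{0..x} \<subseteq> {0..1}" using x by auto
  have "((\<lambda>y. k' (x, y) (0, 1) * Wf y + k (x, y) * Wx y) has_integral (k (x, x) * Wf x - k (x, 0) * Wf 0)) {0..x}"
  proof (rule fundamental_theorem_of_calculus)
    fix y assume y: "y \<in> {0..x}"
    have "((\<lambda>y. k (x, y)) has_real_derivative k' (x, y) (0, 1)) (at y within {0..x})"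
      by (rule C1_with_partial_snd[OF k_C1]) (use y x in auto)
    moreover have "(Wf has_real_derivative Wx y) (at y within {0..x})"
      by (rule DERIV_subset[OF dWf sub]) (use y x in auto)
    ultimately show "((\<lambda>y. k (x, y) * Wf y) has_vector_derivative (k' (x, y) (0, 1) * Wf y + k (x, y) * Wx y))
        (at y within {0..x})"
      unfolding has_real_derivative_iff_has_vector_derivative[symmetric]
      by (auto intro: derivative_eq_intros)
  qed (use x in simp)
  then have "integral {0..x} (\<lambda>y. k' (x, y) (0, 1) * Wf y) + volterra k Wx x = k (x, x) * Wf x - k (x, 0) * Wf 0"
    unfolding volterra_def
    by (subst integral_add[symmetric])
       (auto intro!: integrable_continuous_real continuous_intros continuous_on_Tri_slice[OF continuous_on_k' x]
          continuous_on_Tri_slice[OF continuous_on_k x] continuous_on_subset[OF cWf sub]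
          continuous_on_subset[OF cWx sub] simp: integral_unique)
  then show ?thesis by linarith
qed

(* Wf, Wt, Wx are a target profile and its time and space derivatives, E, Et, Ex the
   corresponding error profiles. *)
lemma backstepping_residual_eq:
  fixes E Et Ex Wf Wt Wx :: "real \<Rightarrow> real"
  assumes cE: "continuous_on {0..1} E" and cWf: "continuous_on {0..1} Wf"
    and cWt: "continuous_on {0..1} Wt" and cWx: "continuous_on {0..1} Wx"
    and Wf_eq: "\<And>x. x \<in> {0..1} \<Longrightarrow> Wf x = E x + volterra k Wf x"
    and Wt_eq: "\<And>x. x \<in> {0..1} \<Longrightarrow> Wt x = Et x + volterra k Wt x"
    and Wx_eq: "\<And>x. x \<in> {0..1} \<Longrightarrow> Wx x = Ex x + k (x, x) * Wf x + integral {0..x} (\<lambda>y. k' (x, y) (1, 0) * Wf y)"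
    and dWf: "\<And>x. x \<in> {0..1} \<Longrightarrow> (Wf has_real_derivative Wx x) (at x within {0..1})"
    and E_pde: "\<And>x. x \<in> {0..1} \<Longrightarrow> Et x = Ex x + k (x, 0) * E 0 + integral {0..x} (\<lambda>y. f (x, y) * E y)"
    and x: "x \<in> {0..1}"
  shows "Wt x - Wx x = volterra k (\<lambda>y. Wt y - Wx y) x"
proof -
  have sub: "{0..x} \<subseteq> {0..1}" using x by auto
  note cont = continuous_on_subset[OF cWf sub] continuous_on_subset[OF cWt sub]
    continuous_on_subset[OF cWx sub] continuous_on_Tri_slice[OF continuous_on_k x]
    continuous_on_Tri_slice[OF continuous_on_k' x]
  have "volterra k (\<lambda>y. Wt y - Wx y) x = volterra k Wt x - volterra k Wx x"
    unfolding volterra_def right_diff_distrib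
    by (intro integral_diff integrable_continuous_real continuous_intros cont)
  moreover have "integral {0..x} (\<lambda>y. (k' (x, y) (1, 0) + k' (x, y) (0, 1)) * Wf y) =
      integral {0..x} (\<lambda>y. k' (x, y) (1, 0) * Wf y) + integral {0..x} (\<lambda>y. k' (x, y) (0, 1) * Wf y)"
    unfolding distrib_right by (intro integral_add integrable_continuous_real continuous_intros cont)
  moreover have "volterra k Wx x = k (x, x) * Wf x - k (x, 0) * E 0 - integral {0..x} (\<lambda>y. k' (x, y) (0, 1) * Wf y)"
    using volterra_k_by_parts[OF cWf cWx dWf x] Wf_eq[of 0] by (simp add: volterra_def)
  moreover have "integral {0..x} (\<lambda>y. (k' (x, y) (1, 0) + k' (x, y) (0, 1)) * Wf y) = integral {0..x} (\<lambda>y. f (x, y) * E y)"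
    using cE cWf Wf_eq x by (rule integral_k_characteristic_derivative)
  ultimately show ?thesis
    using Wt_eq[OF x] Wx_eq[OF x] E_pde[OF x] by linarith
qed

end

lemma continuous_on_Dom_slice:
  assumes "continuous_on Dom (\<lambda>p. h (fst p) (snd p))" "0 \<le> t"
  shows "continuous_on {0..1} (\<lambda>x. h x t)"
  by (rule continuous_on_compose2[OF assms(1), where f="\<lambda>x. (x, t)", simplified])
     (use assms(2) in \<open>auto intro!: continuous_intros\<close>)

lemma continuous_on_Dom_volterra:
  fixes a :: "real \<times> real \<Rightarrow> real" and h :: "real \<Rightarrow> real \<Rightarrow> real"
  assumes ca: "continuous_on Tri a" and ch: "continuous_on Dom (\<lambda>p. h (fst p) (snd p))"
  shows "continuous_on Dom (\<lambda>p. volterra a (\<lambda>y. h y (snd p)) (fst p))"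
  unfolding volterra_def
proof (rule continuous_on_integral_bounds_param[where a=0 and b=1])
  let ?S = "{(p, s). p \<in> Dom \<and> 0 \<le> s \<and> s \<le> fst p}"
  have "continuous_on ?S (\<lambda>q. a (fst (fst q), snd q))"
    by (rule continuous_on_compose2[OF ca]) (auto intro!: continuous_intros simp: Dom_def)
  moreover have "continuous_on ?S (\<lambda>q. h (snd q) (snd (fst q)))"
    by (rule continuous_on_compose2[OF ch, where f="\<lambda>q. (snd q, snd (fst q))", simplified])
       (auto intro!: continuous_intros simp: Dom_def)
  ultimately show "continuous_on ?S (\<lambda>(p, y). a (fst p, y) * h y (snd p))"
    by (simp add: case_prod_beta continuous_on_mult)
qed (auto intro!: continuous_intros simp: Dom_def)

lemma exp_minus_1_le_mult_exp:
  fixes M :: real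
  shows "exp M - 1 \<le> M * exp M"
proof -
  have "(1 - M) * exp M \<le> exp (- M) * exp M"
    using exp_ge_add_one_self[of "- M"] by (intro mult_right_mono) auto
  then show ?thesis by (simp add: exp_minus field_simps)
qed

locale observer_error = goursat_kernel f k k' Mf for f k k' Mf +
  fixes g U :: "real \<Rightarrow> real" and u hu :: "real \<times> real \<Rightarrow> real"
    and u' hu' :: "real \<times> real \<Rightarrow> real \<times> real \<Rightarrow> real"
  assumes u_C1: "C1_with u u' Dom"
    and u_pde: "\<forall>x t. (x, t) \<in> Dom \<longrightarrow>
        u' (x, t) (0, 1) = u' (x, t) (1, 0) + g x * u (0, t) + integral {0..x} (\<lambda>y. f (x, y) * u (y, t))"
    and u_bc: "\<forall>t\<ge>0. u (1, t) = U t"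
    and hu_C1: "C1_with hu hu' Dom"
    and hu_pde: "\<forall>x t. (x, t) \<in> Dom \<longrightarrow>
        hu' (x, t) (0, 1) = hu' (x, t) (1, 0) + g x * hu (0, t) + integral {0..x} (\<lambda>y. f (x, y) * hu (y, t))
                            + (g x - k (x, 0)) * (u (0, t) - hu (0, t))"
    and hu_bc: "\<forall>t\<ge>0. hu (1, t) = U t"
begin

sublocale bounded_kernel k "exp Mf - 1"
  by unfold_locales (rule continuous_on_k, rule abs_k_le)

definition "e x t = u (x, t) - hu (x, t)"
definition "e_t x t = u' (x, t) (0, 1) - hu' (x, t) (0, 1)"
definition "e_x x t = u' (x, t) (1, 0) - hu' (x, t) (1, 0)"

(* The backstepping target: w solves e = w - volterra k w (volterra_resolvent_eq). *)
definition "w x t = e x t + volterra resolvent (\<lambda>y. e y t) x"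
definition "w_t x t = e_t x t + volterra resolvent (\<lambda>y. e_t y t) x"
definition "w_x x t = e_x x t + k (x, x) * w x t + integral {0..x} (\<lambda>y. k' (x, y) (1, 0) * w y t)"

lemma continuous_on_e: "continuous_on Dom (\<lambda>p. e (fst p) (snd p))"
  unfolding e_def using C1_with_continuous_on[OF u_C1] C1_with_continuous_on[OF hu_C1]
  by (auto intro!: continuous_intros)

lemma continuous_on_e_t: "continuous_on Dom (\<lambda>p. e_t (fst p) (snd p))"
  unfolding e_t_def
  using C1_with_continuous_on_derivative[OF u_C1] C1_with_continuous_on_derivative[OF hu_C1]
  by (auto intro!: continuous_intros)

lemma continuous_on_e_x: "continuous_on Dom (\<lambda>p. e_x (fst p) (snd p))"
  unfolding e_x_def
  using C1_with_continuous_on_derivative[OF u_C1] C1_with_continuous_on_derivative[OF hu_C1]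
  by (auto intro!: continuous_intros)

lemma e_deriv_t:
  assumes x: "x \<in> {0..1}" and t: "0 \<le> t"
  shows "((\<lambda>t. e x t) has_real_derivative e_t x t) (at t within {0..})"
  unfolding e_def e_t_def
  by (intro DERIV_diff C1_with_partial_snd[OF u_C1] C1_with_partial_snd[OF hu_C1]) (use x t in auto)

lemma e_deriv_x:
  assumes x: "x \<in> {0..1}" and t: "0 \<le> t"
  shows "((\<lambda>x. e x t) has_real_derivative e_x x t) (at x within {0..1})"
  unfolding e_def e_x_def
  by (intro DERIV_diff C1_with_partial_fst[OF u_C1] C1_with_partial_fst[OF hu_C1]) (use x t in auto)

(* The injection gain g - k(x,0) cancels g: the error sees k(x,0) in place of g. *)
lemma e_pde:
  assumes x: "x \<in> {0..1}" and t: "0 \<le> t"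
  shows "e_t x t = e_x x t + k (x, 0) * e 0 t + integral {0..x} (\<lambda>y. f (x, y) * e y t)"
proof -
  have I: "integral {0..x} (\<lambda>y. f (x, y) * e y t) =
      integral {0..x} (\<lambda>y. f (x, y) * u (y, t)) - integral {0..x} (\<lambda>y. f (x, y) * hu (y, t))"
    unfolding e_def right_diff_distrib using x t
    by (intro integral_diff integrable_continuous_real continuous_intros continuous_on_Tri_slice[OF continuous_f x]
        continuous_on_compose2[OF C1_with_continuous_on[OF u_C1]]
        continuous_on_compose2[OF C1_with_continuous_on[OF hu_C1]]) auto
  have "e_t x t = (u' (x, t) (1, 0) - hu' (x, t) (1, 0)) + g x * (u (0, t) - hu (0, t))
      + (integral {0..x} (\<lambda>y. f (x, y) * u (y, t)) - integral {0..x} (\<lambda>y. f (x, y) * hu (y, t)))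
      - (g x - k (x, 0)) * (u (0, t) - hu (0, t))"
    unfolding e_t_def using u_pde hu_pde x t by (simp add: algebra_simps)
  also have "\<dots> = e_x x t + k (x, 0) * e 0 t + integral {0..x} (\<lambda>y. f (x, y) * e y t)"
    unfolding I by (simp add: e_x_def e_def algebra_simps)
  finally show ?thesis .
qed

lemma continuous_on_w: "continuous_on Dom (\<lambda>p. w (fst p) (snd p))"
  unfolding w_def
  by (intro continuous_intros continuous_on_e continuous_on_Dom_volterra[OF continuous_on_resolvent continuous_on_e])

lemma continuous_on_w_t: "continuous_on Dom (\<lambda>p. w_t (fst p) (snd p))"
  unfolding w_t_def
  by (intro continuous_intros continuous_on_e_t continuous_on_Dom_volterra[OF continuous_on_resolvent continuous_on_e_t])

lemma w_volterra: "x \<in> {0..1} \<Longrightarrow> 0 \<le> t \<Longrightarrow> w x t = e x t + volterra k (\<lambda>y. w y t) x"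
  unfolding w_def[abs_def] by (simp add: volterra_resolvent_eq[OF continuous_on_Dom_slice[OF continuous_on_e]])

lemma w_t_volterra: "x \<in> {0..1} \<Longrightarrow> 0 \<le> t \<Longrightarrow> w_t x t = e_t x t + volterra k (\<lambda>y. w_t y t) x"
  unfolding w_t_def[abs_def] by (simp add: volterra_resolvent_eq[OF continuous_on_Dom_slice[OF continuous_on_e_t]])

lemma w_deriv_t:
  assumes x: "x \<in> {0..1}" and t: "0 \<le> t"
  shows "((\<lambda>t. w x t) has_real_derivative w_t x t) (at t within {0..})"
proof -
  have cr: "continuous_on {0..x} (\<lambda>y. resolvent (x, y))"
    by (rule continuous_on_Tri_slice[OF continuous_on_resolvent x])
  have "((\<lambda>t. integral (cbox 0 x) (\<lambda>y. resolvent (x, y) * e y t)) has_real_derivative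
         integral (cbox 0 x) (\<lambda>y. resolvent (x, y) * e_t y t)) (at t within {0..})"
  proof (rule leibniz_rule_field_derivative)
    fix s y :: real assume "s \<in> {0..}" and "y \<in> cbox 0 x"
    then show "((\<lambda>s. resolvent (x, y) * e y s) has_real_derivative resolvent (x, y) * e_t y s) (at s within {0..})"
      using x by (intro DERIV_cmult e_deriv_t) (auto simp: cbox_interval)
  next
    fix s :: real assume "s \<in> {0..}"
    then show "(\<lambda>y. resolvent (x, y) * e y s) integrable_on cbox 0 x"
      unfolding cbox_interval using x
      by (intro integrable_continuous_real continuous_intros cr
          continuous_on_subset[OF continuous_on_Dom_slice[OF continuous_on_e]]) auto
  next
    have "continuous_on ({0..} \<times> {0..x}) (\<lambda>q. e_t (snd q) (fst q))"
      by (rule continuous_on_compose2[OF continuous_on_e_t, where f="\<lambda>q. (snd q, fst q)", simplified])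
         (use x in \<open>auto intro!: continuous_intros\<close>)
    then show "continuous_on ({0..} \<times> cbox 0 x) (\<lambda>(s, y). resolvent (x, y) * e_t y s)"
      unfolding cbox_interval case_prod_beta
      by (intro continuous_intros continuous_on_compose2[OF cr]) auto
  qed (use t in auto)
  then show ?thesis
    unfolding w_def w_t_def volterra_def by (intro DERIV_add e_deriv_t x t) (simp add: cbox_interval)
qed

lemma w_deriv_x:
  assumes x: "x \<in> {0..1}" and t: "0 \<le> t"
  shows "((\<lambda>x. w x t) has_real_derivative w_x x t) (at x within {0..1})"
proof -
  have cw: "continuous_on {0..1} (\<lambda>x. w x t)" by (rule continuous_on_Dom_slice[OF continuous_on_w t])
  have "((\<lambda>x. integral {0..x} (\<lambda>y. k (x, y) * w y t)) has_real_derivative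
        (k (x, x) * w x t + integral {0..x} (\<lambda>y. k' (x, y) (1, 0) * w y t))) (at x within {0..1})"
  proof (rule has_real_derivative_integral_upto[OF _ _ _ x])
    have "continuous_on Tri (\<lambda>q. w (snd q) t)"
      by (rule continuous_on_compose2[OF cw]) (auto intro!: continuous_intros)
    then show "continuous_on Tri (\<lambda>(x, y). k (x, y) * w y t)"
      "continuous_on Tri (\<lambda>(x, y). k' (x, y) (1, 0) * w y t)"
      using continuous_on_mult[OF continuous_on_k] continuous_on_mult[OF continuous_on_k']
      by (simp_all add: case_prod_beta)
    fix \<xi> y assume "(\<xi>, y) \<in> Tri"
    then have "((\<lambda>\<xi>. k (\<xi>, y)) has_real_derivative k' (\<xi>, y) (1, 0)) (at \<xi> within {y..1})"
      by (intro C1_with_partial_fst[OF k_C1]) auto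
    then show "((\<lambda>\<xi>. k (\<xi>, y) * w y t) has_real_derivative k' (\<xi>, y) (1, 0) * w y t) (at \<xi> within {y..1})"
      by (rule DERIV_cmult_right)
  qed
  then have "((\<lambda>x. e x t + volterra k (\<lambda>y. w y t) x) has_real_derivative w_x x t) (at x within {0..1})"
    unfolding w_x_def volterra_def using DERIV_add[OF e_deriv_x[OF x t]] by (simp add: add.assoc)
  then show ?thesis
    by (rule has_field_derivative_transform_within[OF _ zero_less_one x]) (use w_volterra t in simp)
qed

lemma w_t_eq_w_x:
  assumes x: "x \<in> {0..1}" and t: "0 \<le> t"
  shows "w_t x t = w_x x t"
proof -
  have cw: "continuous_on {0..1} (\<lambda>x. w x t)" by (rule continuous_on_Dom_slice[OF continuous_on_w t])
  have cw_x: "continuous_on {0..1} (\<lambda>x. w_x x t)"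
    unfolding w_x_def
    by (intro continuous_intros continuous_on_Dom_slice[OF continuous_on_e_x t] cw
        continuous_on_volterra[OF continuous_on_k' cw, unfolded volterra_def]
        continuous_on_compose2[OF continuous_on_k]) auto
  have cw_t: "continuous_on {0..1} (\<lambda>x. w_t x t)" by (rule continuous_on_Dom_slice[OF continuous_on_w_t t])
  have "w_t y t - w_x y t = volterra k (\<lambda>z. w_t z t - w_x z t) y" if "y \<in> {0..1}" for y
    by (rule backstepping_residual_eq[OF continuous_on_Dom_slice[OF continuous_on_e t] cw cw_t cw_x])
       (use that t w_volterra w_t_volterra e_pde w_deriv_x in \<open>auto simp: w_x_def\<close>)
  with volterra_homogeneous_eq_0[OF continuous_on_diff[OF cw_t cw_x] _ x] show ?thesis
    by simp
qed

lemma w_boundary: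
  assumes "0 \<le> t" shows "w 1 t = 0"
proof -
  have "volterra k (\<lambda>y. w y t) 1 = integral {0..1} (\<lambda>y::real. 0)"
    unfolding volterra_def by (rule integral_cong) (use k_bc in auto)
  then show ?thesis using w_volterra[of 1 t] u_bc hu_bc assms by (simp add: e_def)
qed

sublocale transport_solution w w_t
proof
  show "continuous_on ({0..1} \<times> {0..}) (\<lambda>(x, t). w x t)"
    "continuous_on ({0..1} \<times> {0..}) (\<lambda>(x, t). w_t x t)"
    using continuous_on_w continuous_on_w_t by (simp_all add: Dom_def case_prod_beta)
  show "((\<lambda>x. w x t) has_real_derivative w_t x t) (at x within {0..1})" if "x \<in> {0..1}" "0 \<le> t" for x t
    using w_deriv_x[OF that] w_t_eq_w_x[OF that] by simp
qed (fact w_deriv_t w_boundary)+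

lemma e_eq_w: "x \<in> {0..1} \<Longrightarrow> 0 \<le> t \<Longrightarrow> e x t = w x t + volterra (\<lambda>p. - k p) (\<lambda>y. w y t) x"
  using w_volterra by (simp add: volterra_def)

lemma e_eq_0_after_1:
  assumes "1 \<le> t" "x \<in> {0..1}" shows "e x t = 0"
proof -
  have "volterra k (\<lambda>y. w y t) x = integral {0..x} (\<lambda>y::real. 0)"
    unfolding volterra_def by (rule integral_cong) (use assms W_eq_0_after_1 in auto)
  then show ?thesis using w_volterra[of x t] W_eq_0_after_1 assms by simp
qed

lemma L2norm_e_le:
  assumes t: "0 \<le> t"
  shows "L2norm (\<lambda>x. e x t) \<le> exp Mf * (1 + (exp Mf - 1) * exp (exp Mf - 1)) * L2norm (\<lambda>x. e x 0)"
proof -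
  have "L2norm (\<lambda>x. e x t) = L2norm (\<lambda>x. w x t + volterra (\<lambda>p. - k p) (\<lambda>y. w y t) x)"
    by (rule L2norm_cong) (rule e_eq_w[OF _ t])
  also have "\<dots> \<le> (1 + (exp Mf - 1)) * L2norm (\<lambda>x. w x t)"
    by (rule L2norm_add_volterra_le) (auto intro!: continuous_intros continuous_on_k continuous_on_W_slice t abs_k_le)
  also have "\<dots> \<le> (1 + (exp Mf - 1)) * ((1 + (exp Mf - 1) * exp (exp Mf - 1)) * L2norm (\<lambda>x. e x 0))"
  proof (rule mult_left_mono)
    have "L2norm (\<lambda>x. w x t) \<le> L2norm (\<lambda>x. w x 0)"
      by (rule L2norm_W_antimono[OF t])
    also have "\<dots> \<le> (1 + (exp Mf - 1) * exp (exp Mf - 1)) * L2norm (\<lambda>x. e x 0)"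
      unfolding w_def
      by (rule L2norm_add_volterra_le[OF continuous_on_resolvent abs_resolvent_le
            continuous_on_Dom_slice[OF continuous_on_e]]) auto
    finally show "L2norm (\<lambda>x. w x t) \<le> (1 + (exp Mf - 1) * exp (exp Mf - 1)) * L2norm (\<lambda>x. e x 0)" .
  qed simp
  finally show ?thesis by (simp add: mult.assoc)
qed

lemma L2norm_e_exp_decay:
  assumes t: "0 \<le> t" and c: "0 < c"
  defines "L \<equiv> Mf * exp Mf"
  shows "L2norm (\<lambda>x. e x t) \<le> exp c * (1 + L * exp L) * (1 + L) * exp (- c * t) * L2norm (\<lambda>x. e x 0)"
proof -
  let ?B = "exp Mf - 1"
  have L0: "0 \<le> L" and BL: "?B \<le> L" and B0: "0 \<le> ?B"
    using Mf_nonneg exp_minus_1_le_mult_exp[of Mf] by (simp_all add: L_def)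
  have rhs_nonneg: "0 \<le> (1 + L * exp L) * (1 + L) * L2norm (\<lambda>x. e x 0)"
    using L0 by (intro mult_nonneg_nonneg L2norm_nonneg) auto
  show ?thesis
  proof (cases "1 \<le> t")
    case True
    have "L2norm (\<lambda>x. e x t) = L2norm (\<lambda>x. 0)"
      by (rule L2norm_cong) (rule e_eq_0_after_1[OF True])
    then have "L2norm (\<lambda>x. e x t) = 0" by (simp add: L2norm_def)
    moreover have "0 \<le> exp c * (1 + L * exp L) * (1 + L) * exp (- c * t) * L2norm (\<lambda>x. e x 0)"
      using L0 by (intro mult_nonneg_nonneg L2norm_nonneg) auto
    ultimately show ?thesis by simp
  next
    case False
    have "L2norm (\<lambda>x. e x t) \<le> (1 + ?B) * (1 + ?B * exp ?B) * L2norm (\<lambda>x. e x 0)"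
      using L2norm_e_le[OF t] by (simp add: mult.assoc)
    also have "\<dots> \<le> (1 + L) * (1 + L * exp L) * L2norm (\<lambda>x. e x 0)"
      using BL B0 L0 by (intro mult_right_mono mult_mono L2norm_nonneg add_left_mono) auto
    also have "\<dots> \<le> exp (c - c * t) * ((1 + L * exp L) * (1 + L) * L2norm (\<lambda>x. e x 0))"
    proof -
      have "c * t \<le> c" using False c by (simp add: mult_left_le)
      then have "1 \<le> exp (c - c * t)" by simp
      from mult_right_mono[OF this rhs_nonneg] show ?thesis by (simp add: mult_ac)
    qed
    finally show ?thesis by (simp add: exp_diff exp_minus field_simps)
  qed
qed

end

theorem theorem2:
  fixes f k :: "real \<times> real \<Rightarrow> real"
    and k' :: "real \<times> real \<Rightarrow> real \<times> real \<Rightarrow> real"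
    and g U Ud u0 u0d hu0 hu0d :: "real \<Rightarrow> real"
    and u hu :: "real \<times> real \<Rightarrow> real"
    and u' hu' :: "real \<times> real \<Rightarrow> real \<times> real \<Rightarrow> real"
  assumes f_C1: "C1_on2 f Tri"
    and g_C1: "C1_on1 g {0..1}"
    and k_C1: "C1_with k k' Tri"
    and k_pde: "\<forall>x y. (x, y) \<in> Tri \<longrightarrow>
        k' (x, y) (0, 1) + k' (x, y) (1, 0)
          = f (x, y) - integral {y..x} (\<lambda>\<eta>. f (x, \<eta>) * k (\<eta>, y))"
    and k_bc: "\<forall>y\<in>{0..1}. k (1, y) = 0"
    and U_C1: "C1_with1 U Ud {0..}"
    and u0_C1: "C1_with1 u0 u0d {0..1}"
    and hu0_C1: "C1_with1 hu0 hu0d {0..1}"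
    and compat1: "u0 1 = U 0"
    and compat2: "Ud 0 = u0d 1 + g 1 * u0 0 + integral {0..1} (\<lambda>y. f (1, y) * u0 y)"
    and compat3: "hu0 1 = U 0"
    and compat4: "Ud 0 = hu0d 1 + g 1 * hu0 0 + integral {0..1} (\<lambda>y. f (1, y) * hu0 y)
                     + (g 1 - k (1, 0)) * (u0 0 - hu0 0)"
    and u_C1: "C1_with u u' Dom"
    and u_pde: "\<forall>x t. (x, t) \<in> Dom \<longrightarrow>
        u' (x, t) (0, 1) = u' (x, t) (1, 0) + g x * u (0, t)
                           + integral {0..x} (\<lambda>y. f (x, y) * u (y, t))"
    and u_bc: "\<forall>t\<ge>0. u (1, t) = U t"
    and u_ic: "\<forall>x\<in>{0..1}. u (x, 0) = u0 x"
    and hu_C1: "C1_with hu hu' Dom"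
    and hu_pde: "\<forall>x t. (x, t) \<in> Dom \<longrightarrow>
        hu' (x, t) (0, 1) = hu' (x, t) (1, 0) + g x * hu (0, t)
                           + integral {0..x} (\<lambda>y. f (x, y) * hu (y, t))
                           + (g x - k (x, 0)) * (u (0, t) - hu (0, t))"
    and hu_bc: "\<forall>t\<ge>0. hu (1, t) = U t"
    and hu_ic: "\<forall>x\<in>{0..1}. hu (x, 0) = hu0 x"
  shows "(\<forall>t\<ge>0. \<forall>c>0.
           (let Mf = (SUP p\<in>Tri. \<bar>f p\<bar>);
                M = exp c * (1 + (Mf * exp Mf) * exp (Mf * exp Mf)) * (1 + Mf * exp Mf)
            in L2norm (\<lambda>x. u (x, t) - hu (x, t)) \<le> M * exp (- c * t) * L2norm (\<lambda>x. u0 x - hu0 x)))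
       \<and> (\<forall>t\<ge>1. \<forall>x\<in>{0..1}. hu (x, t) = u (x, t))"
proof -
  obtain f' where "C1_with f f' Tri" using f_C1 unfolding C1_on2_def by blast
  then have cf: "continuous_on Tri f" by (rule C1_with_continuous_on)
  define Mf where "Mf = (SUP p\<in>Tri. \<bar>f p\<bar>)"
  obtain C where "\<And>p. p \<in> Tri \<Longrightarrow> \<bar>f p\<bar> \<le> C" using continuous_on_Tri_bounded[OF cf] by blast
  then have fM: "\<And>p. p \<in> Tri \<Longrightarrow> \<bar>f p\<bar> \<le> Mf"
    unfolding Mf_def by (intro cSUP_upper bdd_aboveI2)
  interpret observer_error f k k' Mf g U u hu u' hu'
    by unfold_locales (fact cf fM k_C1 k_pde k_bc u_C1 u_pde u_bc hu_C1 hu_pde hu_bc)+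
  have "L2norm (\<lambda>x. u0 x - hu0 x) = L2norm (\<lambda>x. e x 0)"
    by (rule L2norm_cong) (simp add: e_def u_ic hu_ic)
  then show ?thesis
    using L2norm_e_exp_decay e_eq_0_after_1 unfolding Mf_def[symmetric] Let_def
    by (auto simp: e_def[abs_def])
qed

end
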